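(* Let $T_0$ and $T_1$ be local, invertible stochastic matrices on the state space $\mathbb{Z}\times\{1,\dots,D\}$. If $T_0$ and $T_1$ are not homotopic (in the sense defined in the context), then there is no local rate matrix $R(t)$, $t\in[0,1]$, such that $$T_1=\mathcal{T}\exp\Big[\int_0^1 dt\,R(t)\Big]\,T_0 .$$ In particular, if a local invertible stochastic matrix $T$ is not homotopic to the identity matrix, then $T$ cannot be written as $\mathcal{T}\exp\big[\int_0^{\tau}dt\,R(t)\big]$ for any $\tau>0$ and any local rate matrix $R(t)$, $t\in[0,\tau]$ (i.e. $T$ cannot be generated by any local Markovian master equation).
   Context: States are pairs $(j,a)$ with lattice site $j\in\mathbb{Z}$ and internal index $a\in\{1,\dots,D\}$. A stochastic matrix is a real matrix $T=(T_{i,a;j,b})$ indexed by pairs of states with $T_{i,a;j,b}\ge 0$ and $\sum_{i,a}T_{i,a;j,b}=1$ for every $(j,b)$; it acts on probability vectors $\mathbf p=(p_{j,b})$ by $\mathbf p\mapsto T\mathbf p$, and is a bounded operator on $\ell^1(\mathbb{Z}\times\{1,\dots,D\})$. $T$ is local if there are constants $C,\ell>0$ with $T_{i,a;j,b}\le C e^{-|i-j|/\ell}$ for all sufficiently large $|i-j|$. $T$ is invertible if it has a bounded inverse on $\ell^1$. Two local invertible stochastic matrices $T_0,T_1$ are homotopic if there is a family $T(s)$, $s\in[0,1]$, continuous in $s$ (in $\ell^1$ operator norm), such that each $T(s)$ is a local invertible stochastic matrix, $T(0)=T_0$ and $T(1)=T_1$. A rate matrix $R(t)=(R_{i,a;j,b}(t))$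 is a real matrix with $R_{i,a;j,b}(t)\ge 0$ for $(i,a)\ne(j,b)$ and $\sum_{i,a}R_{i,a;j,b}(t)=0$ for all $(j,b)$; it generates the master equation $\frac{d\mathbf p}{dt}=R(t)\mathbf p(t)$. A family $R(t)$ is local if there exist $C,\ell>0$, independent of $t$, with $|R_{i,a;j,b}(t)|\le Ce^{-|i-j|/\ell}$ for all $i,j,a,b,t$; we take $R(t)$ piecewise continuous in $t$. $\mathcal{T}\exp[\int_0^s dt\,R(t)]$ denotes the time-ordered exponential, i.e. the solution $P(s)$ of $\frac{dP}{ds}=R(s)P(s)$, $P(0)=I$. *)

theory Defs
  imports "HOL-Analysis.Analysis"
begin

text \<open>States are pairs (j,a) with j an integer lattice site and a an internal index
  ranging over a finite (nonempty) type 'd, playing the role of {1,...,D}.\<close>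

type_synonym 'd smat = "(int \<times> 'd) \<Rightarrow> (int \<times> 'd) \<Rightarrow> real"

definition id_mat :: "'d smat" where
  "id_mat = (\<lambda>x y. if x = y then 1 else 0)"

definition mat_mult :: "'d smat \<Rightarrow> 'd smat \<Rightarrow> 'd smat" where
  "mat_mult A B = (\<lambda>x z. (\<Sum>\<^sub>\<infinity> y. A x y * B y z))"

text \<open>A column-wise l1 estimate: the l1 operator norm of A - B is at most e
  (the l1 -> l1 operator norm of a matrix is the supremum of the l1 norms of its columns).\<close>
definition mat_close :: "'d smat \<Rightarrow> 'd smat \<Rightarrow> real \<Rightarrow> bool" where
  "mat_close A B e \<longleftrightarrow>
     (\<forall>y. (\<lambda>x. \<bar>A x y - B x y\<bar>) summable_on UNIV \<and> (\<Sum>\<^sub>\<infinity> x. \<bar>A x y - B x y\<bar>) \<le> e)"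

definition stochastic :: "'d smat \<Rightarrow> bool" where
  "stochastic T \<longleftrightarrow> (\<forall>x y. T x y \<ge> 0) \<and> (\<forall>y. ((\<lambda>x. T x y) has_sum 1) UNIV)"

definition local_mat :: "'d smat \<Rightarrow> bool" where
  "local_mat T \<longleftrightarrow> (\<exists>C l N. C > 0 \<and> l > 0 \<and>
     (\<forall>i a j b. \<bar>i - j\<bar> \<ge> N \<longrightarrow> T (i,a) (j,b) \<le> C * exp (- real_of_int \<bar>i - j\<bar> / l)))"

definition invertible_l1 :: "'d smat \<Rightarrow> bool" where
  "invertible_l1 T \<longleftrightarrow> (\<exists>S M. (\<forall>y. (\<lambda>x. \<bar>S x y\<bar>) summable_on UNIV \<and> (\<Sum>\<^sub>\<infinity> x. \<bar>S x y\<bar>) \<le> M)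
       \<and> mat_mult S T = id_mat \<and> mat_mult T S = id_mat)"

definition lis_mat :: "'d smat \<Rightarrow> bool" where
  "lis_mat T \<longleftrightarrow> local_mat T \<and> invertible_l1 T \<and> stochastic T"

definition mat_continuous_on :: "real set \<Rightarrow> (real \<Rightarrow> 'd smat) \<Rightarrow> bool" where
  "mat_continuous_on S F \<longleftrightarrow> (\<forall>t\<in>S. \<forall>e>0. \<exists>d>0. \<forall>t'\<in>S. \<bar>t' - t\<bar> < d \<longrightarrow> mat_close (F t') (F t) e)"

definition homotopic_mat :: "'d smat \<Rightarrow> 'd smat \<Rightarrow> bool" where
  "homotopic_mat T0 T1 \<longleftrightarrow> (\<exists>F. (\<forall>s\<in>{0..1}. lis_mat (F s)) \<and> mat_continuous_on {0..1} F
      \<and> F 0 = T0 \<and> F 1 = T1)"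

definition rate_mat :: "'d smat \<Rightarrow> bool" where
  "rate_mat R \<longleftrightarrow> (\<forall>x y. x \<noteq> y \<longrightarrow> R x y \<ge> 0) \<and> (\<forall>y. ((\<lambda>x. R x y) has_sum 0) UNIV)"

definition local_rate_family :: "real \<Rightarrow> (real \<Rightarrow> 'd smat) \<Rightarrow> bool" where
  "local_rate_family \<tau> R \<longleftrightarrow> (\<forall>t\<in>{0..\<tau>}. rate_mat (R t)) \<and>
     (\<exists>C l. C > 0 \<and> l > 0 \<and> (\<forall>t\<in>{0..\<tau>}. \<forall>i a j b.
        \<bar>R t (i,a) (j,b)\<bar> \<le> C * exp (- real_of_int \<bar>i - j\<bar> / l)))"

definition piecewise_continuous_mat :: "real \<Rightarrow> (real \<Rightarrow> 'd smat) \<Rightarrow> bool" where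
  "piecewise_continuous_mat \<tau> R \<longleftrightarrow> (\<exists>K. finite K \<and>
     (\<forall>t\<in>{0..\<tau>} - K. \<forall>e>0. \<exists>d>0. \<forall>t'\<in>{0..\<tau>}. \<bar>t' - t\<bar> < d \<longrightarrow> mat_close (R t') (R t) e) \<and>
     (\<forall>t\<in>K \<inter> {0..\<tau>}.
        (t < \<tau> \<longrightarrow> (\<exists>L. \<forall>e>0. \<exists>d>0. \<forall>t'\<in>{0..\<tau>}. t < t' \<and> t' < t + d \<longrightarrow> mat_close (R t') L e)) \<and>
        (0 < t \<longrightarrow> (\<exists>L. \<forall>e>0. \<exists>d>0. \<forall>t'\<in>{0..\<tau>}. t - d < t' \<and> t' < t \<longrightarrow> mat_close (R t') L e))))"

text \<open>P is the time-ordered exponential of R on [0,tau]: the (continuous) solution of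
  dP/ds = R(s) P(s), P(0) = I, the derivative taken in l1 operator norm and required
  at all but finitely many s (the jump points of the piecewise continuous R).\<close>
definition texp_solution :: "real \<Rightarrow> (real \<Rightarrow> 'd smat) \<Rightarrow> (real \<Rightarrow> 'd smat) \<Rightarrow> bool" where
  "texp_solution \<tau> R P \<longleftrightarrow> P 0 = id_mat \<and> mat_continuous_on {0..\<tau>} P \<and>
     (\<exists>K. finite K \<and> (\<forall>s\<in>{0..\<tau>} - K. \<forall>e>0. \<exists>d>0. \<forall>h. h \<noteq> 0 \<and> \<bar>h\<bar> < d \<and> s + h \<in> {0..\<tau>} \<longrightarrow>
        mat_close (\<lambda>x y. (P (s + h) x y - P s x y) / h) (mat_mult (R s) (P s)) e))"

end

theory Submission
  imports Defs
begin

(*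
  If T1 = P(1) T0 with P the time-ordered exponential of a local rate matrix R, then
  s |-> P(s) T0 is a homotopy from T0 to T1; for T = P(tau) the reversed path
  s |-> P((1 - s) tau) joins T to the identity.  So it suffices that every P(s) is local,
  stochastic and invertible.  Column sums are conserved because the columns of R sum to zero,
  and negative parts cannot appear because I + hR is entrywise nonnegative for small h.
  Locality is a Gronwall estimate in the l1 norm weighted by exp(mu |i - j|): it gives
  |P(s)_ij| <= exp(rho s) exp(-mu |i - j|).  The same estimate shows that P(t) P(s)^-1 is
  within 1/2 of the identity when exp(rho (t - s)) <= 3/2, so a Neumann series inverts it and
  invertibility propagates along [0, tau] in steps of fixed length.  Products of local
  invertible stochastic matrices are again of this kind.
*)

section \<open>One-sided derivative bounds on the real line\<close>

definition upper_right_deriv_le :: "real \<Rightarrow> (real \<Rightarrow> real) \<Rightarrow> real \<Rightarrow> real \<Rightarrow> bool" where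
  "upper_right_deriv_le b f s D \<longleftrightarrow>
     (\<forall>e>0. \<exists>d>0. \<forall>h. 0 < h \<and> h < d \<and> s + h \<le> b \<longrightarrow> f (s + h) \<le> f s + h * (D + e))"

lemma le_if_upper_right_deriv_nonpos:
  fixes f :: "real \<Rightarrow> real"
  assumes ab: "a \<le> b" and cont: "continuous_on {a..b} f"
    and deriv: "\<And>s. s \<in> {a..<b} \<Longrightarrow> upper_right_deriv_le b f s 0"
  shows "f b \<le> f a"
proof -
  have slack: "f b \<le> f a + e * (b - a)" if e: "e > 0" for e
  proof -
    define S where "S = {t \<in> {a..b}. f t - e * (t - a) \<le> f a}"
    have "closed S"
    proof -
      have "continuous_on {a..b} (\<lambda>t. f t - e * (t - a))"
        by (intro continuous_intros cont)
      moreover have "S = (\<lambda>t. f t - e * (t - a)) -` {..f a} \<inter> {a..b}"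
        by (auto simp: S_def)
      ultimately show ?thesis by (auto intro: closed_vimage_Int)
    qed
    moreover have "a \<in> S" using ab by (auto simp: S_def)
    moreover have bdd: "bdd_above S" by (auto simp: S_def bdd_above_def)
    ultimately have cS: "Sup S \<in> S" using closed_contains_Sup by blast
    define c where "c = Sup S"
    show ?thesis
    proof (cases "c = b")
      case True
      then show ?thesis using cS by (auto simp: S_def c_def)
    next
      case False
      then have cb: "c < b" using cS by (auto simp: S_def c_def)
      obtain d where d: "d > 0" "\<forall>h. 0 < h \<and> h < d \<and> c + h \<le> b \<longrightarrow> f (c + h) \<le> f c + h * (0 + e)"
        using deriv[of c] cS cb e by (auto simp: S_def c_def upper_right_deriv_le_def)
      define h where "h = min (d / 2) (b - c)"
      have h: "0 < h" "h < d" "c + h \<le> b" using d cb by (auto simp: h_def)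
      have "c + h \<in> S"
        using d h cS by (auto simp: S_def c_def algebra_simps)
      then have "c + h \<le> c" unfolding c_def using bdd by (rule cSup_upper)
      then show ?thesis using h by simp
    qed
  qed
  show ?thesis
  proof (rule ccontr)
    assume contra: "\<not> f b \<le> f a"
    define e where "e = (f b - f a) / (2 * (b - a + 1))"
    have e: "e > 0" using contra ab by (auto simp: e_def)
    have "e * (b - a) \<le> (f b - f a) / 2"
      using contra ab unfolding e_def by (simp add: field_simps)
    then show False using slack[OF e] contra by simp
  qed
qed

lemma le_if_upper_right_deriv_nonpos_except:
  fixes f :: "real \<Rightarrow> real"
  assumes "finite K"
  shows "a \<le> b \<Longrightarrow> continuous_on {a..b} f \<Longrightarrow>
    (\<And>s. s \<in> {a..<b} - K \<Longrightarrow> upper_right_deriv_le b f s 0) \<Longrightarrow> f b \<le> f a"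
  using assms
proof (induction K arbitrary: a b rule: finite_induct)
  case empty
  then show ?case using le_if_upper_right_deriv_nonpos[of a b f] by auto
next
  case (insert k K)
  have deriv_le_restrict: "upper_right_deriv_le b' f s 0"
    if "upper_right_deriv_le b f s 0" "b' \<le> b" for s b'
    using that unfolding upper_right_deriv_le_def by (meson order_trans)
  show ?case
  proof (cases "k \<in> {a..<b}")
    case False
    then show ?thesis using insert.IH[of a b] insert.prems by auto
  next
    case True
    have "f k \<le> f a"
    proof (rule insert.IH)
      show "a \<le> k" using True by auto
      show "continuous_on {a..k} f"
        by (rule continuous_on_subset[OF insert.prems(2)]) (use True in auto)
      show "upper_right_deriv_le k f s 0" if "s \<in> {a..<k} - K" for s
        using that True insert.prems(3)[of s] deriv_le_restrict[of s k] by auto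
    qed
    moreover have "f b \<le> f k"
    proof (rule ccontr)
      assume contra: "\<not> f b \<le> f k"
      have "k \<in> {a..b}" using True by auto
      with insert.prems(2) obtain \<delta> where \<delta>: "\<delta> > 0"
        "\<forall>x'\<in>{a..b}. dist x' k < \<delta> \<longrightarrow> dist (f x') (f k) < f b - f k"
        using contra unfolding continuous_on_iff by (metis diff_gt_0_iff_gt not_le)
      define k' where "k' = k + min (\<delta> / 2) (b - k)"
      have k': "k < k'" "k' \<le> b" "k' \<in> {a..b}" "dist k' k < \<delta>"
        using True \<delta> by (auto simp: k'_def dist_real_def)
      have "f b \<le> f k'"
      proof (rule insert.IH)
        show "k' \<le> b" using k' by simp
        show "continuous_on {k'..b} f"
          by (rule continuous_on_subset[OF insert.prems(2)]) (use True k' in auto)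
        show "upper_right_deriv_le b f s 0" if "s \<in> {k'..<b} - K" for s
          using that True k' insert.prems(3)[of s] by auto
      qed
      moreover have "dist (f k') (f k) < f b - f k" using \<delta> k' by auto
      ultimately show False by (auto simp: dist_real_def)
    qed
    ultimately show ?thesis by simp
  qed
qed

lemma eq_if_right_deriv_zero_except:
  fixes f :: "real \<Rightarrow> real"
  assumes ab: "a \<le> b" and cont: "continuous_on {a..b} f" and K: "finite K"
    and deriv: "\<And>s e. s \<in> {a..<b} - K \<Longrightarrow> e > 0 \<Longrightarrow>
      \<exists>d>0. \<forall>h. 0 < h \<and> h < d \<and> s + h \<le> b \<longrightarrow> \<bar>f (s + h) - f s\<bar> \<le> h * e"
  shows "f b = f a"
proof -
  have "upper_right_deriv_le b f s 0 \<and> upper_right_deriv_le b (\<lambda>t. - f t) s 0"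
    if s: "s \<in> {a..<b} - K" for s
    unfolding upper_right_deriv_le_def
  proof (intro conjI allI impI)
    fix e :: real assume "e > 0"
    then obtain d where d: "d > 0" "\<forall>h. 0 < h \<and> h < d \<and> s + h \<le> b \<longrightarrow> \<bar>f (s + h) - f s\<bar> \<le> h * e"
      using deriv[OF s] by blast
    have "f (s + h) \<le> f s + h * (0 + e) \<and> - f (s + h) \<le> - f s + h * (0 + e)"
      if "0 < h \<and> h < d \<and> s + h \<le> b" for h
    proof -
      have "\<bar>f (s + h) - f s\<bar> \<le> h * e" using d(2) that by blast
      then show ?thesis by (simp add: abs_le_iff)
    qed
    then show "\<exists>d>0. \<forall>h. 0 < h \<and> h < d \<and> s + h \<le> b \<longrightarrow> f (s + h) \<le> f s + h * (0 + e)"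
      and "\<exists>d>0. \<forall>h. 0 < h \<and> h < d \<and> s + h \<le> b \<longrightarrow> - f (s + h) \<le> - f s + h * (0 + e)"
      using d(1) by blast+
  qed
  moreover have "continuous_on {a..b} (\<lambda>t. - f t)" by (intro continuous_intros cont)
  ultimately have "f b \<le> f a" "- f b \<le> - f a"
    using le_if_upper_right_deriv_nonpos_except[OF K ab] cont by blast+
  then show ?thesis by simp
qed

lemma gronwall_upper_right_deriv:
  fixes f :: "real \<Rightarrow> real"
  assumes ab: "a \<le> b" and cont: "continuous_on {a..b} f" and K: "finite K" and q: "q \<ge> 0"
    and nonneg: "\<And>t. t \<in> {a..b} \<Longrightarrow> f t \<ge> 0"
    and deriv: "\<And>s. s \<in> {a..<b} - K \<Longrightarrow> upper_right_deriv_le b f s (q * f s)"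
  shows "f b \<le> f a * exp (q * (b - a))"
proof -
  define g where "g t = f t * exp (- q * (t - a))" for t
  have "g b \<le> g a"
  proof (rule le_if_upper_right_deriv_nonpos_except[OF K ab])
    show "continuous_on {a..b} g" unfolding g_def by (intro continuous_intros cont)
    show "upper_right_deriv_le b g s 0" if s: "s \<in> {a..<b} - K" for s
      unfolding upper_right_deriv_le_def
    proof (intro allI impI)
      fix e :: real assume e: "e > 0"
      obtain d where d: "d > 0"
        "\<forall>h. 0 < h \<and> h < d \<and> s + h \<le> b \<longrightarrow> f (s + h) \<le> f s + h * (q * f s + e)"
        using deriv[OF s] e unfolding upper_right_deriv_le_def by blast
      have "g (s + h) \<le> g s + h * (0 + e)" if h: "0 < h" "h < d" "s + h \<le> b" for h
      proof -
        have fs: "f s \<ge> 0" using nonneg s by auto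
        have damp: "(1 + q * h) * exp (- q * h) \<le> 1"
        proof -
          have "(1 + q * h) * exp (- q * h) \<le> exp (q * h) * exp (- q * h)"
            using exp_ge_add_one_self[of "q * h"] by (simp add: mult_right_mono)
          then show ?thesis by (simp add: exp_minus field_simps)
        qed
        have small: "exp (- q * (s - a)) \<le> 1" "exp (- q * h) \<le> 1" using q s h by auto
        have "g (s + h) = f (s + h) * exp (- q * (s - a)) * exp (- q * h)"
          by (simp add: g_def exp_add[symmetric] algebra_simps)
        also have "\<dots> \<le> (f s * (1 + q * h) + h * e) * exp (- q * (s - a)) * exp (- q * h)"
          using d h by (intro mult_right_mono) (auto simp: algebra_simps)
        also have "\<dots> = f s * exp (- q * (s - a)) * ((1 + q * h) * exp (- q * h))
                        + h * e * (exp (- q * (s - a)) * exp (- q * h))"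
          by (simp add: algebra_simps)
        also have "\<dots> \<le> f s * exp (- q * (s - a)) * 1 + h * e * 1"
          using damp small fs h e by (intro add_mono mult_left_mono) (auto simp: mult_le_one)
        finally show ?thesis by (simp add: g_def)
      qed
      then show "\<exists>d>0. \<forall>h. 0 < h \<and> h < d \<and> s + h \<le> b \<longrightarrow> g (s + h) \<le> g s + h * (0 + e)"
        using d(1) by blast
    qed
  qed
  then have "f b * exp (- q * (b - a)) * exp (q * (b - a)) \<le> f a * exp (q * (b - a))"
    by (simp add: g_def mult_right_mono)
  then show ?thesis by (simp add: mult.assoc exp_add[symmetric])
qed

section \<open>Absolutely summable real families\<close>

lemma summable_on_diff:
  fixes f g :: "'a \<Rightarrow> 'b::topological_ab_group_add"
  assumes "f summable_on A" "g summable_on A"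
  shows "(\<lambda>x. f x - g x) summable_on A"
  using summable_on_add[OF assms(1) summable_on_uminus[THEN iffD2, OF assms(2)]] by simp

lemma infsum_diff:
  fixes f g :: "'a \<Rightarrow> 'b::{topological_ab_group_add, t2_space}"
  assumes "f summable_on A" "g summable_on A"
  shows "(\<Sum>\<^sub>\<infinity>x\<in>A. f x - g x) = infsum f A - infsum g A"
  using infsum_add[OF assms(1) summable_on_uminus[THEN iffD2, OF assms(2)]]
  by (simp add: infsum_uminus)

lemma abs_summable_on_iff_real:
  fixes f :: "'a \<Rightarrow> real"
  shows "(\<lambda>x. \<bar>f x\<bar>) summable_on A \<longleftrightarrow> f summable_on A"
  using summable_on_iff_abs_summable_on_real[of f A] by simp

lemma summable_on_real_comparison:
  fixes f :: "'a \<Rightarrow> real"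
  assumes "g summable_on A" "\<And>x. x \<in> A \<Longrightarrow> \<bar>f x\<bar> \<le> g x"
  shows "f summable_on A"
proof -
  have "(\<lambda>x. norm (f x)) summable_on A"
    by (rule Infinite_Sum.abs_summable_on_comparison_test'[OF assms(1)]) (use assms(2) in auto)
  then show ?thesis using abs_summable_on_iff_real[of f A] by simp
qed

lemma abs_infsum_le_infsum_abs:
  fixes f :: "'a \<Rightarrow> real"
  assumes "(\<lambda>x. \<bar>f x\<bar>) summable_on A"
  shows "\<bar>infsum f A\<bar> \<le> (\<Sum>\<^sub>\<infinity>x\<in>A. \<bar>f x\<bar>)"
  using norm_infsum_bound[of f A] assms by simp

lemma abs_infsum_le:
  fixes f :: "'a \<Rightarrow> real"
  assumes "g summable_on A" "\<And>x. x \<in> A \<Longrightarrow> \<bar>f x\<bar> \<le> g x"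
  shows "\<bar>infsum f A\<bar> \<le> infsum g A"
proof -
  have "(\<lambda>x. \<bar>f x\<bar>) summable_on A"
    using summable_on_real_comparison[OF assms] abs_summable_on_iff_real by blast
  then have "\<bar>infsum f A\<bar> \<le> (\<Sum>\<^sub>\<infinity>x\<in>A. \<bar>f x\<bar>)"
    by (rule abs_infsum_le_infsum_abs)
  also have "\<dots> \<le> infsum g A"
    by (rule infsum_mono[OF \<open>(\<lambda>x. \<bar>f x\<bar>) summable_on A\<close> assms(1)]) (use assms(2) in auto)
  finally show ?thesis .
qed

lemma le_infsum_nonneg:
  fixes f :: "'a \<Rightarrow> real"
  assumes "f summable_on UNIV" "\<And>x. f x \<ge> 0"
  shows "f x \<le> infsum f UNIV"
  using finite_sum_le_infsum[OF assms(1), of "{x}"] assms(2) by simp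

lemma has_sum_single:
  "((\<lambda>x. if x = y then c else 0) has_sum c) UNIV"
proof -
  have "((\<lambda>x. if x = y then c else 0) has_sum c) {y}"
    using has_sum_finite[of "{y}" "\<lambda>x. if x = y then c else 0"] by simp
  then show ?thesis by (rule has_sum_cong_neutral[THEN iffD1, rotated -1]) auto
qed

lemma infsum_swap_abs:
  fixes f :: "'a \<Rightarrow> 'b \<Rightarrow> real"
  assumes inner: "\<And>x. (\<lambda>y. \<bar>f x y\<bar>) summable_on UNIV"
    and outer: "(\<lambda>x. \<Sum>\<^sub>\<infinity>y. \<bar>f x y\<bar>) summable_on UNIV"
  shows "\<And>y. (\<lambda>x. \<bar>f x y\<bar>) summable_on UNIV"
    and "(\<lambda>y. \<Sum>\<^sub>\<infinity>x. \<bar>f x y\<bar>) summable_on UNIV"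
    and "(\<Sum>\<^sub>\<infinity>x. \<Sum>\<^sub>\<infinity>y. f x y) = (\<Sum>\<^sub>\<infinity>y. \<Sum>\<^sub>\<infinity>x. f x y)"
proof -
  have "(\<lambda>(x, y). \<bar>f x y\<bar>) summable_on Sigma UNIV (\<lambda>_. UNIV)"
    by (rule summable_on_SigmaI[OF _ outer]) (use has_sum_infsum[OF inner] in auto)
  then have pairs: "(\<lambda>(x, y). \<bar>f x y\<bar>) summable_on UNIV \<times> UNIV" by simp
  then have swapped: "(\<lambda>(y, x). \<bar>f x y\<bar>) summable_on UNIV \<times> UNIV"
    using summable_on_swap[of "\<lambda>(x, y). \<bar>f x y\<bar>" UNIV UNIV] by (simp add: case_prod_beta)
  show slice: "(\<lambda>x. \<bar>f x y\<bar>) summable_on UNIV" for y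
    using summable_on_SigmaD1[of "\<lambda>y x. \<bar>f x y\<bar>" UNIV "\<lambda>_. UNIV" y] swapped by simp
  show "(\<lambda>y. \<Sum>\<^sub>\<infinity>x. \<bar>f x y\<bar>) summable_on UNIV"
    using summable_on_SigmaD[of "\<lambda>(y, x). \<bar>f x y\<bar>" UNIV "\<lambda>_. UNIV"] swapped slice by simp
  have "(\<lambda>(x, y). f x y) summable_on UNIV \<times> UNIV"
    by (rule summable_on_real_comparison[OF pairs]) auto
  then show "(\<Sum>\<^sub>\<infinity>x. \<Sum>\<^sub>\<infinity>y. f x y) = (\<Sum>\<^sub>\<infinity>y. \<Sum>\<^sub>\<infinity>x. f x y)"
    by (rule infsum_swap_banach)
qed

lemma infsum_swap_nonneg_le:
  fixes g :: "'a \<Rightarrow> 'b \<Rightarrow> real"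
  assumes nonneg: "\<And>z x. 0 \<le> g z x" and inner: "\<And>z. (\<lambda>x. g z x) summable_on UNIV"
    and inner_le: "\<And>z. (\<Sum>\<^sub>\<infinity>x. g z x) \<le> p z" and p: "p summable_on UNIV"
  shows "\<And>x. (\<lambda>z. g z x) summable_on UNIV" and "(\<lambda>x. \<Sum>\<^sub>\<infinity>z. g z x) summable_on UNIV"
    and "(\<Sum>\<^sub>\<infinity>x. \<Sum>\<^sub>\<infinity>z. g z x) \<le> (\<Sum>\<^sub>\<infinity>z. p z)"
proof -
  have abs: "\<bar>g z x\<bar> = g z x" for z x using nonneg[of z x] by simp
  have inner': "(\<lambda>x. \<bar>g z x\<bar>) summable_on UNIV" for z using inner by (simp add: abs)
  have outer: "(\<lambda>z. \<Sum>\<^sub>\<infinity>x. g z x) summable_on UNIV"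
    by (rule summable_on_comparison_test[OF p inner_le]) (simp add: infsum_nonneg nonneg)
  then have outer': "(\<lambda>z. \<Sum>\<^sub>\<infinity>x. \<bar>g z x\<bar>) summable_on UNIV" by (simp add: abs)
  note swap = infsum_swap_abs[OF inner' outer']
  show "(\<lambda>z. g z x) summable_on UNIV" for x using swap(1) by (simp add: abs)
  show "(\<lambda>x. \<Sum>\<^sub>\<infinity>z. g z x) summable_on UNIV" using swap(2) by (simp add: abs)
  have "(\<Sum>\<^sub>\<infinity>x. \<Sum>\<^sub>\<infinity>z. g z x) = (\<Sum>\<^sub>\<infinity>z. \<Sum>\<^sub>\<infinity>x. g z x)" by (rule swap(3)[symmetric])
  also have "\<dots> \<le> (\<Sum>\<^sub>\<infinity>z. p z)" by (rule infsum_mono[OF outer p inner_le])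
  finally show "(\<Sum>\<^sub>\<infinity>x. \<Sum>\<^sub>\<infinity>z. g z x) \<le> (\<Sum>\<^sub>\<infinity>z. p z)" .
qed

section \<open>Matrices as bounded operators on l1\<close>

definition l1_norm_le :: "('s \<Rightarrow> real) \<Rightarrow> real \<Rightarrow> bool" where
  "l1_norm_le u M \<longleftrightarrow> (\<lambda>x. \<bar>u x\<bar>) summable_on UNIV \<and> (\<Sum>\<^sub>\<infinity>x. \<bar>u x\<bar>) \<le> M"

definition op_norm_le :: "('s \<Rightarrow> 's \<Rightarrow> real) \<Rightarrow> real \<Rightarrow> bool" where
  "op_norm_le A M \<longleftrightarrow> (\<forall>y. l1_norm_le (\<lambda>x. A x y) M)"

definition mat_vec :: "('s \<Rightarrow> 's \<Rightarrow> real) \<Rightarrow> ('s \<Rightarrow> real) \<Rightarrow> 's \<Rightarrow> real" where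
  "mat_vec A u = (\<lambda>x. \<Sum>\<^sub>\<infinity>z. A x z * u z)"

definition wnorm :: "('s \<Rightarrow> real) \<Rightarrow> ('s \<Rightarrow> real) \<Rightarrow> real" where
  "wnorm w u = (\<Sum>\<^sub>\<infinity>x. w x * \<bar>u x\<bar>)"

lemma mat_mult_eq_mat_vec: "mat_mult A B x y = mat_vec A (\<lambda>z. B z y) x"
  by (simp add: mat_mult_def mat_vec_def)

lemma mat_close_iff_op_norm_le: "mat_close A B e \<longleftrightarrow> op_norm_le (\<lambda>x y. A x y - B x y) e"
  by (simp add: mat_close_def op_norm_le_def l1_norm_le_def)

lemma op_norm_leD: "op_norm_le A M \<Longrightarrow> l1_norm_le (\<lambda>x. A x y) M"
  unfolding op_norm_le_def by blast

lemma op_norm_leI: "(\<And>y. l1_norm_le (\<lambda>x. A x y) M) \<Longrightarrow> op_norm_le A M"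
  unfolding op_norm_le_def by blast

lemma l1_norm_le_summable: "l1_norm_le u M \<Longrightarrow> u summable_on UNIV"
  unfolding l1_norm_le_def using abs_summable_on_iff_real by blast

lemma l1_norm_le_abs_le: "l1_norm_le u M \<Longrightarrow> \<bar>u x\<bar> \<le> M"
  unfolding l1_norm_le_def using le_infsum_nonneg[of "\<lambda>x. \<bar>u x\<bar>" x] by force

lemma l1_norm_le_nonneg: "l1_norm_le u M \<Longrightarrow> 0 \<le> M"
  using l1_norm_le_abs_le[of u M undefined] by linarith

lemma l1_norm_le_mono: "l1_norm_le u M \<Longrightarrow> M \<le> M' \<Longrightarrow> l1_norm_le u M'"
  unfolding l1_norm_le_def by auto

lemma l1_norm_le_comparison:
  assumes "l1_norm_le u M" "\<And>x. \<bar>v x\<bar> \<le> \<bar>u x\<bar>"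
  shows "l1_norm_le v M"
proof -
  have u: "(\<lambda>x. \<bar>u x\<bar>) summable_on UNIV" "(\<Sum>\<^sub>\<infinity>x. \<bar>u x\<bar>) \<le> M"
    using assms(1) unfolding l1_norm_le_def by auto
  have v: "(\<lambda>x. \<bar>v x\<bar>) summable_on UNIV"
    by (rule summable_on_real_comparison[OF u(1)]) (use assms(2) in auto)
  have "(\<Sum>\<^sub>\<infinity>x. \<bar>v x\<bar>) \<le> (\<Sum>\<^sub>\<infinity>x. \<bar>u x\<bar>)"
    by (rule infsum_mono[OF v u(1)]) (use assms(2) in auto)
  then show ?thesis using u v unfolding l1_norm_le_def by auto
qed

lemma l1_norm_le_add:
  assumes "l1_norm_le u M" "l1_norm_le v N"
  shows "l1_norm_le (\<lambda>x. u x + v x) (M + N)"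
proof -
  have sum: "(\<lambda>x. \<bar>u x\<bar> + \<bar>v x\<bar>) summable_on UNIV" "(\<Sum>\<^sub>\<infinity>x. \<bar>u x\<bar> + \<bar>v x\<bar>) \<le> M + N"
    using assms unfolding l1_norm_le_def by (auto simp: infsum_add intro: summable_on_add)
  then have "l1_norm_le (\<lambda>x. \<bar>u x\<bar> + \<bar>v x\<bar>) (M + N)"
    unfolding l1_norm_le_def by (simp add: abs_of_nonneg add_nonneg_nonneg)
  then show ?thesis by (rule l1_norm_le_comparison) auto
qed

lemma l1_norm_le_diff:
  assumes "l1_norm_le u M" "l1_norm_le v N"
  shows "l1_norm_le (\<lambda>x. u x - v x) (M + N)"
proof -
  have "l1_norm_le (\<lambda>x. - v x) N" using assms(2) by (simp add: l1_norm_le_def)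
  from l1_norm_le_add[OF assms(1) this] show ?thesis by simp
qed

lemma l1_norm_le_scale:
  assumes "l1_norm_le u M"
  shows "l1_norm_le (\<lambda>x. c * u x) (\<bar>c\<bar> * M)"
  using assms unfolding l1_norm_le_def
  by (auto simp: abs_mult infsum_cmult_right' intro: summable_on_cmult_right mult_left_mono)

lemma l1_norm_le_single: "l1_norm_le (\<lambda>x. if x = y then 1 else 0) 1"
  using has_sum_single[of y "1::real"] unfolding l1_norm_le_def
  by (simp add: has_sum_iff if_distrib cong: if_cong)

lemma l1_norm_le_mult_bounded:
  assumes "\<And>z. \<bar>a z\<bar> \<le> A" "l1_norm_le b B"
  shows "l1_norm_le (\<lambda>z. a z * b z) (A * B)"
proof -
  have A0: "0 \<le> A" using assms(1)[of undefined] by linarith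
  then have "l1_norm_le (\<lambda>z. A * b z) (A * B)" using l1_norm_le_scale[OF assms(2), of A] by simp
  then show ?thesis
    by (rule l1_norm_le_comparison) (use assms(1) A0 in \<open>auto simp: abs_mult intro: mult_right_mono\<close>)
qed

lemma weighted_schur_bound:
  fixes A :: "'s \<Rightarrow> 's \<Rightarrow> real" and u :: "'s \<Rightarrow> real"
  assumes col: "\<And>z. (\<lambda>x. w x z * \<bar>A x z\<bar>) summable_on UNIV"
      "\<And>z. wnorm (\<lambda>x. w x z) (\<lambda>x. A x z) \<le> a"
    and vec: "(\<lambda>z. v z * \<bar>u z\<bar>) summable_on UNIV" "wnorm v u \<le> b"
    and w1: "\<And>x z. 1 \<le> w x z" and v1: "\<And>z. 1 \<le> v z"
    and om: "\<And>x z. om x \<le> w x z * v z" "\<And>x. 0 \<le> om x"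
  shows "(\<lambda>z. A x z * u z) summable_on UNIV"
    and "(\<lambda>x. om x * \<bar>mat_vec A u x\<bar>) summable_on UNIV"
    and "wnorm om (mat_vec A u) \<le> a * b"
proof -
  define g where "g z x = v z * \<bar>u z\<bar> * (w x z * \<bar>A x z\<bar>)" for z x
  have g_nonneg: "0 \<le> v z * \<bar>u z\<bar>" "0 \<le> w x z * \<bar>A x z\<bar>" for x z
    using v1[of z] w1[of x z] by auto
  have a0: "0 \<le> a"
    using col(2)[of undefined] infsum_nonneg[of UNIV "\<lambda>x. w x undefined * \<bar>A x undefined\<bar>"] g_nonneg
    unfolding wnorm_def by force
  have inner_le: "(\<Sum>\<^sub>\<infinity>x. g z x) \<le> a * (v z * \<bar>u z\<bar>)" for z
  proof -
    have "(\<Sum>\<^sub>\<infinity>x. g z x) = v z * \<bar>u z\<bar> * wnorm (\<lambda>x. w x z) (\<lambda>x. A x z)"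
      unfolding g_def wnorm_def by (rule infsum_cmult_right')
    also have "\<dots> \<le> v z * \<bar>u z\<bar> * a" by (rule mult_left_mono[OF col(2) g_nonneg(1)])
    finally show ?thesis by (simp add: algebra_simps)
  qed
  note kernel = infsum_swap_nonneg_le[of g, OF _ _ inner_le summable_on_cmult_right[OF vec(1)]]
  define H where "H x = (\<Sum>\<^sub>\<infinity>z. g z x)" for x
  have H: "H summable_on UNIV" "infsum H UNIV \<le> a * b"
    using kernel(2,3) mult_left_mono[OF vec(2) a0] g_nonneg summable_on_cmult_right[OF col(1)]
    by (simp_all add: H_def[abs_def] g_def infsum_cmult_right' wnorm_def)
  have row: "(\<lambda>z. g z x) summable_on UNIV" for x
    using kernel(1) g_nonneg summable_on_cmult_right[OF col(1)] by (simp add: g_def)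
  show row_summable: "(\<lambda>z. A x z * u z) summable_on UNIV" for x
  proof (rule summable_on_real_comparison[OF row])
    fix z
    have "\<bar>A x z * u z\<bar> = 1 * (\<bar>u z\<bar> * \<bar>A x z\<bar>)" by (simp add: abs_mult)
    also have "\<dots> \<le> (v z * w x z) * (\<bar>u z\<bar> * \<bar>A x z\<bar>)"
      using mult_mono[OF v1[of z] w1[of x z]] v1[of z] by (intro mult_right_mono) auto
    finally show "\<bar>A x z * u z\<bar> \<le> g z x" by (simp add: g_def algebra_simps)
  qed
  have om_le: "om x * \<bar>mat_vec A u x\<bar> \<le> H x" for x
  proof -
    have "\<bar>mat_vec A u x\<bar> \<le> (\<Sum>\<^sub>\<infinity>z. \<bar>A x z * u z\<bar>)"
      unfolding mat_vec_def
      by (rule abs_infsum_le_infsum_abs) (rule abs_summable_on_iff_real[THEN iffD2, OF row_summable])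
    then have "om x * \<bar>mat_vec A u x\<bar> \<le> (\<Sum>\<^sub>\<infinity>z. om x * \<bar>A x z * u z\<bar>)"
      using mult_left_mono[OF _ om(2)] by (simp add: infsum_cmult_right')
    also have "\<dots> \<le> H x" unfolding H_def
    proof (rule infsum_mono[OF _ row])
      show "(\<lambda>z. om x * \<bar>A x z * u z\<bar>) summable_on UNIV"
        by (rule summable_on_cmult_right) (rule abs_summable_on_iff_real[THEN iffD2, OF row_summable])
      show "om x * \<bar>A x z * u z\<bar> \<le> g z x" for z
        using mult_right_mono[OF om(1)[of x z], of "\<bar>u z\<bar> * \<bar>A x z\<bar>"]
        by (simp add: g_def abs_mult algebra_simps)
    qed
    finally show ?thesis .
  qed
  show weighted: "(\<lambda>x. om x * \<bar>mat_vec A u x\<bar>) summable_on UNIV"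
    by (rule summable_on_comparison_test[OF H(1)]) (use om_le om(2) in auto)
  have "wnorm om (mat_vec A u) \<le> infsum H UNIV"
    unfolding wnorm_def by (rule infsum_mono[OF weighted H(1)]) (use om_le in auto)
  then show "wnorm om (mat_vec A u) \<le> a * b" using H(2) by linarith
qed

lemma mat_vec_bound:
  assumes "op_norm_le A a" "l1_norm_le u b"
  shows "\<And>x. (\<lambda>z. A x z * u z) summable_on UNIV" and "l1_norm_le (mat_vec A u) (a * b)"
proof -
  have col: "\<And>z. (\<lambda>x. 1 * \<bar>A x z\<bar>) summable_on UNIV" "\<And>z. wnorm (\<lambda>x. 1) (\<lambda>x. A x z) \<le> a"
    using assms(1) by (auto simp: op_norm_le_def l1_norm_le_def wnorm_def)
  have vec: "(\<lambda>z. 1 * \<bar>u z\<bar>) summable_on UNIV" "wnorm (\<lambda>z. 1) u \<le> b"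
    using assms(2) by (auto simp: l1_norm_le_def wnorm_def)
  note schur = weighted_schur_bound[of "\<lambda>x z. 1" A a "\<lambda>z. 1" u b "\<lambda>x. 1", OF col vec]
  show "\<And>x. (\<lambda>z. A x z * u z) summable_on UNIV" using schur by auto
  show "l1_norm_le (mat_vec A u) (a * b)" using schur by (auto simp: l1_norm_le_def wnorm_def)
qed

lemma op_norm_le_mat_mult:
  assumes "op_norm_le A a" "op_norm_le B b"
  shows "op_norm_le (mat_mult A B) (a * b)"
  using mat_vec_bound(2)[OF assms(1) op_norm_leD[OF assms(2)]]
  by (auto simp: op_norm_le_def mat_mult_eq_mat_vec[abs_def])

lemma infsum_mat_vec:
  assumes A: "op_norm_le A a" and u: "l1_norm_le u b"
  shows "(\<Sum>\<^sub>\<infinity>x. mat_vec A u x) = (\<Sum>\<^sub>\<infinity>z. (\<Sum>\<^sub>\<infinity>x. A x z) * u z)"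
proof -
  define f where "f z x = A x z * u z" for z x
  have col: "(\<lambda>x. \<bar>A x z\<bar>) summable_on UNIV" "(\<Sum>\<^sub>\<infinity>x. \<bar>A x z\<bar>) \<le> a" for z
    using op_norm_leD[OF A, of z] by (auto simp: l1_norm_le_def)
  have inner: "(\<lambda>x. \<bar>f z x\<bar>) summable_on UNIV" for z
    unfolding f_def abs_mult by (rule summable_on_cmult_left[OF col(1)])
  have inner_le: "(\<Sum>\<^sub>\<infinity>x. \<bar>f z x\<bar>) \<le> a * \<bar>u z\<bar>" for z
    unfolding f_def abs_mult infsum_cmult_left' by (rule mult_right_mono[OF col(2)]) simp
  have outer: "(\<lambda>z. \<Sum>\<^sub>\<infinity>x. \<bar>f z x\<bar>) summable_on UNIV"
  proof (rule summable_on_comparison_test[of "\<lambda>z. a * \<bar>u z\<bar>"])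
    show "(\<lambda>z. a * \<bar>u z\<bar>) summable_on UNIV"
      using u by (auto simp: l1_norm_le_def intro: summable_on_cmult_right)
  qed (use inner_le in \<open>auto intro: infsum_nonneg\<close>)
  have "(\<Sum>\<^sub>\<infinity>x. mat_vec A u x) = (\<Sum>\<^sub>\<infinity>x. \<Sum>\<^sub>\<infinity>z. f z x)" by (simp add: mat_vec_def f_def)
  also have "\<dots> = (\<Sum>\<^sub>\<infinity>z. \<Sum>\<^sub>\<infinity>x. f z x)" by (rule infsum_swap_abs(3)[OF inner outer, symmetric])
  also have "\<dots> = (\<Sum>\<^sub>\<infinity>z. (\<Sum>\<^sub>\<infinity>x. A x z) * u z)" by (simp add: f_def infsum_cmult_left')
  finally show ?thesis .
qed

lemma mat_vec_mat_vec:
  fixes A B :: "'d smat"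
  assumes A: "op_norm_le A a" and B: "op_norm_le B b" and u: "l1_norm_le u c"
  shows "mat_vec A (mat_vec B u) = mat_vec (mat_mult A B) u"
proof
  fix x
  define f where "f k z = A x z * (B z k * u k)" for k z
  have col: "(\<lambda>z. \<bar>B z k\<bar>) summable_on UNIV" "(\<Sum>\<^sub>\<infinity>z. \<bar>B z k\<bar>) \<le> b" for k
    using op_norm_leD[OF B, of k] by (auto simp: l1_norm_le_def)
  have A_le: "\<bar>A x z\<bar> \<le> a" for z by (rule l1_norm_le_abs_le[OF op_norm_leD[OF A]])
  have a0: "0 \<le> a" by (rule l1_norm_le_nonneg[OF op_norm_leD[OF A]])
  have f_le: "\<bar>f k z\<bar> \<le> a * \<bar>u k\<bar> * \<bar>B z k\<bar>" for k z
    using mult_right_mono[OF A_le, of "\<bar>u k\<bar> * \<bar>B z k\<bar>"] by (simp add: f_def abs_mult algebra_simps)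
  have inner: "(\<lambda>z. \<bar>f k z\<bar>) summable_on UNIV" for k
    by (rule summable_on_comparison_test[OF summable_on_cmult_right[OF col(1)[of k], of "a * \<bar>u k\<bar>"]])
       (use f_le in auto)
  have inner_le: "(\<Sum>\<^sub>\<infinity>z. \<bar>f k z\<bar>) \<le> (a * b) * \<bar>u k\<bar>" for k
  proof -
    have "(\<Sum>\<^sub>\<infinity>z. \<bar>f k z\<bar>) \<le> (\<Sum>\<^sub>\<infinity>z. a * \<bar>u k\<bar> * \<bar>B z k\<bar>)"
      by (rule infsum_mono[OF inner summable_on_cmult_right[OF col(1)[of k]]]) (use f_le in auto)
    also have "\<dots> \<le> a * \<bar>u k\<bar> * b"
      unfolding infsum_cmult_right' by (rule mult_left_mono[OF col(2)]) (use a0 in simp)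
    finally show ?thesis by (simp add: algebra_simps)
  qed
  have outer: "(\<lambda>k. \<Sum>\<^sub>\<infinity>z. \<bar>f k z\<bar>) summable_on UNIV"
  proof (rule summable_on_comparison_test[of "\<lambda>k. (a * b) * \<bar>u k\<bar>"])
    show "(\<lambda>k. (a * b) * \<bar>u k\<bar>) summable_on UNIV"
      using u by (auto simp: l1_norm_le_def intro: summable_on_cmult_right)
  qed (use inner_le in \<open>auto intro: infsum_nonneg\<close>)
  have "mat_vec A (mat_vec B u) x = (\<Sum>\<^sub>\<infinity>z. \<Sum>\<^sub>\<infinity>k. f k z)"
    by (simp add: mat_vec_def f_def infsum_cmult_right')
  also have "\<dots> = (\<Sum>\<^sub>\<infinity>k. \<Sum>\<^sub>\<infinity>z. f k z)" by (rule infsum_swap_abs(3)[OF inner outer, symmetric])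
  also have "\<dots> = mat_vec (mat_mult A B) u x"
    by (simp add: mat_vec_def mat_mult_def f_def mult.assoc[symmetric] infsum_cmult_left')
  finally show "mat_vec A (mat_vec B u) x = mat_vec (mat_mult A B) u x" .
qed

lemma mat_mult_assoc:
  assumes "op_norm_le A a" "op_norm_le B b" "op_norm_le C c"
  shows "mat_mult (mat_mult A B) C = mat_mult A (mat_mult B C)"
proof (intro ext)
  fix x y
  have "mat_mult A (mat_mult B C) x y = mat_vec A (mat_vec B (\<lambda>z. C z y)) x"
    by (simp add: mat_mult_eq_mat_vec[abs_def])
  also have "\<dots> = mat_vec (mat_mult A B) (\<lambda>z. C z y) x"
    using mat_vec_mat_vec[OF assms(1,2) op_norm_leD[OF assms(3)]] by simp
  finally show "mat_mult (mat_mult A B) C x y = mat_mult A (mat_mult B C) x y"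
    by (simp add: mat_mult_eq_mat_vec)
qed

lemma mat_vec_diff:
  assumes "op_norm_le A a" "l1_norm_le u b" "l1_norm_le u' b'"
  shows "mat_vec A (\<lambda>z. u z - u' z) x = mat_vec A u x - mat_vec A u' x"
  unfolding mat_vec_def right_diff_distrib
  by (rule infsum_diff[OF mat_vec_bound(1)[OF assms(1,2)] mat_vec_bound(1)[OF assms(1,3)]])

lemma mat_vec_diff_left:
  assumes "op_norm_le A a" "op_norm_le A' a'" "l1_norm_le u b"
  shows "mat_vec (\<lambda>x z. A x z - A' x z) u x = mat_vec A u x - mat_vec A' u x"
  unfolding mat_vec_def left_diff_distrib
  by (rule infsum_diff[OF mat_vec_bound(1)[OF assms(1,3)] mat_vec_bound(1)[OF assms(2,3)]])

lemma mat_vec_diff_scale_left: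
  assumes A: "op_norm_le A a" and B: "op_norm_le B b" and C: "op_norm_le C c" and u: "l1_norm_le u m"
  shows "mat_vec (\<lambda>x z. A x z - B x z - h * C x z) u x = mat_vec A u x - mat_vec B u x - h * mat_vec C u x"
proof -
  have A_row: "(\<lambda>z. A x z * u z) summable_on UNIV" by (rule mat_vec_bound(1)[OF A u])
  have B_row: "(\<lambda>z. B x z * u z) summable_on UNIV" by (rule mat_vec_bound(1)[OF B u])
  have C_row: "(\<lambda>z. h * (C x z * u z)) summable_on UNIV"
    by (rule summable_on_cmult_right[OF mat_vec_bound(1)[OF C u]])
  have "mat_vec (\<lambda>x z. A x z - B x z - h * C x z) u x
        = (\<Sum>\<^sub>\<infinity>z. (A x z * u z - B x z * u z) - h * (C x z * u z))"
    unfolding mat_vec_def by (simp add: algebra_simps)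
  also have "\<dots> = mat_vec A u x - mat_vec B u x - h * mat_vec C u x"
    unfolding mat_vec_def
    by (simp add: infsum_diff[OF summable_on_diff[OF A_row B_row] C_row] infsum_diff[OF A_row B_row]
        infsum_cmult_right')
  finally show ?thesis .
qed

lemma mat_close_mat_vec:
  assumes "mat_close A B e" "op_norm_le A a" "op_norm_le B b" "l1_norm_le u m"
  shows "l1_norm_le (\<lambda>x. mat_vec A u x - mat_vec B u x) (e * m)"
proof -
  have "mat_vec (\<lambda>x z. A x z - B x z) u = (\<lambda>x. mat_vec A u x - mat_vec B u x)"
    using mat_vec_diff_left[OF assms(2,3,4)] by auto
  then show ?thesis
    using mat_vec_bound(2)[OF assms(1)[unfolded mat_close_iff_op_norm_le] assms(4)] by simp
qed

lemma mat_vec_ge_diag: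
  assumes A: "op_norm_le A a" and u: "l1_norm_le u b"
    and u_nonneg: "\<And>z. 0 \<le> u z" and off_diag: "\<And>z. z \<noteq> x \<Longrightarrow> 0 \<le> A x z"
  shows "A x x * u x \<le> mat_vec A u x"
proof -
  have "(\<Sum>\<^sub>\<infinity>z. if z = x then A x x * u x else 0) \<le> (\<Sum>\<^sub>\<infinity>z. A x z * u z)"
  proof (rule infsum_mono)
    show "(\<lambda>z. if z = x then A x x * u x else 0) summable_on UNIV"
      using has_sum_single[of x "A x x * u x"] unfolding summable_on_def by blast
    show "(\<lambda>z. A x z * u z) summable_on UNIV" by (rule mat_vec_bound(1)[OF A u])
    show "(if z = x then A x x * u x else 0) \<le> A x z * u z" for z
      using off_diag[of z] u_nonneg[of z] by auto
  qed
  then show ?thesis using infsumI[OF has_sum_single[of x "A x x * u x"]] by (simp add: mat_vec_def)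
qed

lemma mat_vec_single: "mat_vec A (\<lambda>z. if z = y then 1 else 0) x = A x y"
proof -
  have "mat_vec A (\<lambda>z. if z = y then 1 else 0) x = (\<Sum>\<^sub>\<infinity>z. if z = y then A x y else 0)"
    unfolding mat_vec_def by (rule infsum_cong) auto
  then show ?thesis using infsumI[OF has_sum_single] by simp
qed

lemma mat_vec_id: "mat_vec id_mat u = u"
proof
  fix x
  have "mat_vec id_mat u x = (\<Sum>\<^sub>\<infinity>z. if z = x then u x else 0)"
    unfolding mat_vec_def id_mat_def by (rule infsum_cong) auto
  then show "mat_vec id_mat u x = u x" using infsumI[OF has_sum_single] by simp
qed

lemma mat_mult_id_left: "mat_mult id_mat A = A"
  by (intro ext) (simp add: mat_mult_eq_mat_vec mat_vec_id)

lemma mat_mult_id_right: "mat_mult A id_mat = A"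
  by (intro ext) (simp add: mat_mult_eq_mat_vec id_mat_def eq_commute[of _ "snd _"] mat_vec_single)

lemma op_norm_le_id: "op_norm_le id_mat 1"
  by (rule op_norm_leI) (simp add: id_mat_def l1_norm_le_single)

section \<open>Local, stochastic and invertible matrices\<close>

lemma summable_on_exp_decay_nat:
  assumes "c > 0"
  shows "(\<lambda>n::nat. exp (- c * real n)) summable_on UNIV"
proof -
  have "summable (\<lambda>n::nat. exp (- c) ^ n)" by (rule summable_geometric) (use assms in simp)
  moreover have "exp (- c * real n) = exp (- c) ^ n" for n
    using exp_of_nat_mult[of n "- c"] by (simp add: algebra_simps)
  ultimately show ?thesis by (subst summable_on_UNIV_nonneg_real_iff) auto
qed

lemma summable_on_exp_decay_int:
  assumes c: "c > 0"
  shows "(\<lambda>k::int. exp (- c * real_of_int \<bar>k\<bar>)) summable_on UNIV"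
proof -
  let ?f = "\<lambda>k::int. exp (- c * real_of_int \<bar>k\<bar>)"
  have UNIV_split: "UNIV = range (\<lambda>n::nat. int n) \<union> range (\<lambda>n::nat. - int n - 1)"
  proof -
    have "k \<in> range int \<or> k \<in> range (\<lambda>n::nat. - int n - 1)" for k :: int
      by (cases "k \<ge> 0") (auto intro: image_eqI[of _ _ "nat k"] image_eqI[of _ _ "nat (- k - 1)"])
    then show ?thesis by blast
  qed
  have nonneg_part: "?f summable_on range int"
    using summable_on_exp_decay_nat[OF c]
    by (subst summable_on_reindex) (auto simp: inj_on_def o_def)
  have neg_part: "?f summable_on range (\<lambda>n::nat. - int n - 1)"
  proof (subst summable_on_reindex)
    show "inj_on (\<lambda>n::nat. - int n - 1) UNIV" by (auto simp: inj_on_def)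
    show "(?f \<circ> (\<lambda>n::nat. - int n - 1)) summable_on UNIV"
      by (rule summable_on_comparison_test[OF summable_on_exp_decay_nat[OF c]]) (use c in auto)
  qed
  show ?thesis by (subst UNIV_split) (rule summable_on_union[OF nonneg_part neg_part])
qed

definition exp_decay_sum :: "real \<Rightarrow> real" where
  "exp_decay_sum c = (\<Sum>\<^sub>\<infinity>k::int. exp (- c * real_of_int \<bar>k\<bar>))"

lemma exp_decay_sum_nonneg: "0 \<le> exp_decay_sum c"
  unfolding exp_decay_sum_def by (rule infsum_nonneg) simp

lemma exp_decay_sum_shift:
  assumes c: "c > 0"
  shows "(\<lambda>k::int. exp (- c * real_of_int \<bar>k - j\<bar>)) summable_on UNIV"
    and "(\<Sum>\<^sub>\<infinity>k::int. exp (- c * real_of_int \<bar>k - j\<bar>)) = exp_decay_sum c"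
proof -
  have shift: "bij_betw (\<lambda>k. k - j) UNIV (UNIV::int set)"
    by (rule bij_betwI[of _ _ _ "\<lambda>k. k + j"]) auto
  show "(\<lambda>k::int. exp (- c * real_of_int \<bar>k - j\<bar>)) summable_on UNIV"
    using summable_on_reindex_bij_betw[OF shift, of "\<lambda>k. exp (- c * real_of_int \<bar>k\<bar>)"]
      summable_on_exp_decay_int[OF c] by simp
  show "(\<Sum>\<^sub>\<infinity>k::int. exp (- c * real_of_int \<bar>k - j\<bar>)) = exp_decay_sum c"
    using infsum_reindex_bij_betw[OF shift, of "\<lambda>k. exp (- c * real_of_int \<bar>k\<bar>)"]
    by (simp add: exp_decay_sum_def)
qed

lemma exp_decay_sum_states:
  assumes c: "c > 0"
  shows "(\<lambda>x::int \<times> 'd::finite. exp (- c * real_of_int \<bar>fst x - j\<bar>)) summable_on UNIV"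
    and "(\<Sum>\<^sub>\<infinity>x::int \<times> 'd. exp (- c * real_of_int \<bar>fst x - j\<bar>)) = real CARD('d) * exp_decay_sum c"
proof -
  let ?f = "\<lambda>x::int \<times> 'd. exp (- c * real_of_int \<bar>fst x - j\<bar>)"
  let ?g = "\<lambda>k::int. real CARD('d) * exp (- c * real_of_int \<bar>k - j\<bar>)"
  have fibre: "((\<lambda>a. ?f (k, a)) has_sum ?g k) UNIV" for k
    using has_sum_finite[of UNIV "\<lambda>a. ?f (k, a)"] by simp
  have "?f summable_on Sigma UNIV (\<lambda>_. UNIV)"
    by (rule summable_on_SigmaI[OF fibre summable_on_cmult_right[OF exp_decay_sum_shift(1)[OF c]]]) auto
  then show summable: "?f summable_on UNIV" by simp
  have "(\<Sum>\<^sub>\<infinity>x. ?f x) = (\<Sum>\<^sub>\<infinity>k. \<Sum>\<^sub>\<infinity>a. ?f (k, a))"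
    using infsum_Sigma_banach[of ?f UNIV "\<lambda>_. UNIV"] summable by simp
  also have "\<dots> = (\<Sum>\<^sub>\<infinity>k. ?g k)" by (rule infsum_cong) (rule infsumI[OF fibre])
  also have "\<dots> = real CARD('d) * exp_decay_sum c"
    by (simp only: infsum_cmult_right' exp_decay_sum_shift(2)[OF c])
  finally show "(\<Sum>\<^sub>\<infinity>x. ?f x) = real CARD('d) * exp_decay_sum c" .
qed

lemma exp_decay_mat_mult:
  fixes A B :: "'d::finite smat"
  assumes \<alpha>: "\<alpha> > 0" and \<beta>: "\<beta> > 0"
    and A: "\<And>x z. \<bar>A x z\<bar> \<le> a * exp (- \<alpha> * real_of_int \<bar>fst x - fst z\<bar>)"
    and B: "\<And>z y. \<bar>B z y\<bar> \<le> b * exp (- \<beta> * real_of_int \<bar>fst z - fst y\<bar>)"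
  defines "\<gamma> \<equiv> min \<alpha> \<beta> / 2"
  shows "\<bar>mat_mult A B x y\<bar>
    \<le> a * b * (real CARD('d) * exp_decay_sum \<gamma>) * exp (- \<gamma> * real_of_int \<bar>fst x - fst y\<bar>)"
proof -
  have \<gamma>: "\<gamma> > 0" "2 * \<gamma> \<le> \<alpha>" "2 * \<gamma> \<le> \<beta>" using \<alpha> \<beta> by (auto simp: \<gamma>_def)
  have "\<bar>A x x\<bar> \<le> a" "\<bar>B y y\<bar> \<le> b" using A[of x x] B[of y y] by simp_all
  then have a0: "0 \<le> a" and b0: "0 \<le> b" by linarith+
  define D where "D = real_of_int \<bar>fst x - fst y\<bar>"
  define g where "g z = a * b * exp (- \<gamma> * D) * exp (- \<gamma> * real_of_int \<bar>fst z - fst x\<bar>)"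
    for z :: "int \<times> 'd"
  have term_le: "\<bar>A x z * B z y\<bar> \<le> g z" for z
  proof -
    define d1 d2 where "d1 = real_of_int \<bar>fst x - fst z\<bar>" and "d2 = real_of_int \<bar>fst z - fst y\<bar>"
    have d: "0 \<le> d1" "0 \<le> d2" "D \<le> d1 + d2" by (auto simp: d1_def d2_def D_def)
    have "\<bar>A x z * B z y\<bar> \<le> (a * exp (- \<alpha> * d1)) * (b * exp (- \<beta> * d2))"
      unfolding abs_mult d1_def d2_def by (rule mult_mono[OF A B]) (use a0 in auto)
    also have "\<dots> \<le> (a * exp (- (2 * \<gamma>) * d1)) * (b * exp (- (2 * \<gamma>) * d2))"
      using \<gamma> d a0 b0 by (intro mult_mono mult_left_mono) (auto intro: mult_right_mono)
    also have "\<dots> = a * b * exp (- \<gamma> * (d1 + d2) - \<gamma> * (d1 + d2))"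
      by (simp add: exp_add[symmetric] algebra_simps)
    also have "\<dots> \<le> a * b * exp (- \<gamma> * D - \<gamma> * d1)"
    proof -
      have "0 \<le> \<gamma> * (d1 + d2 - D) + \<gamma> * d2" using \<gamma> d by simp
      moreover have "\<gamma> * (d1 + d2 - D) + \<gamma> * d2
          = (- \<gamma> * D - \<gamma> * d1) - (- \<gamma> * (d1 + d2) - \<gamma> * (d1 + d2))"
        by (simp add: algebra_simps)
      ultimately show ?thesis using a0 b0 by (intro mult_left_mono) auto
    qed
    finally show ?thesis by (simp add: g_def d1_def abs_minus_commute exp_diff exp_minus field_simps)
  qed
  have majorant: "g summable_on UNIV"
    unfolding g_def by (rule summable_on_cmult_right[OF exp_decay_sum_states(1)[OF \<gamma>(1)]])
  have "\<bar>mat_mult A B x y\<bar> \<le> infsum g UNIV"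
    unfolding mat_mult_def by (rule abs_infsum_le[OF majorant]) (use term_le in auto)
  also have "infsum g UNIV = a * b * exp (- \<gamma> * D) * (real CARD('d) * exp_decay_sum \<gamma>)"
    unfolding g_def by (simp only: infsum_cmult_right' exp_decay_sum_states(2)[OF \<gamma>(1)])
  finally show ?thesis by (simp add: D_def algebra_simps)
qed

lemma mat_mult_inverse:
  fixes A B :: "'d smat"
  assumes A: "op_norm_le A a" and B: "op_norm_le B b" and SA: "op_norm_le SA sa" and SB: "op_norm_le SB sb"
    and inv_A: "mat_mult SA A = id_mat" "mat_mult A SA = id_mat"
    and inv_B: "mat_mult SB B = id_mat" "mat_mult B SB = id_mat"
  shows "op_norm_le (mat_mult SB SA) (sb * sa)"
    and "mat_mult (mat_mult SB SA) (mat_mult A B) = id_mat"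
    and "mat_mult (mat_mult A B) (mat_mult SB SA) = id_mat"
proof -
  show "op_norm_le (mat_mult SB SA) (sb * sa)" by (rule op_norm_le_mat_mult[OF SB SA])
  have "mat_mult (mat_mult SB SA) (mat_mult A B) = mat_mult SB (mat_mult (mat_mult SA A) B)"
    by (simp add: mat_mult_assoc[OF SB SA op_norm_le_mat_mult[OF A B]] mat_mult_assoc[OF SA A B])
  then show "mat_mult (mat_mult SB SA) (mat_mult A B) = id_mat"
    using inv_A inv_B by (simp add: mat_mult_id_left)
  have "mat_mult (mat_mult A B) (mat_mult SB SA) = mat_mult A (mat_mult (mat_mult B SB) SA)"
    by (simp add: mat_mult_assoc[OF A B op_norm_le_mat_mult[OF SB SA]] mat_mult_assoc[OF B SB SA])
  then show "mat_mult (mat_mult A B) (mat_mult SB SA) = id_mat"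
    using inv_A inv_B by (simp add: mat_mult_id_left)
qed

lemma invertible_l1_iff:
  "invertible_l1 T \<longleftrightarrow> (\<exists>S M. op_norm_le S M \<and> mat_mult S T = id_mat \<and> mat_mult T S = id_mat)"
  unfolding invertible_l1_def op_norm_le_def l1_norm_le_def by blast

lemma invertible_l1_mat_mult:
  assumes "op_norm_le A a" "op_norm_le B b" "invertible_l1 A" "invertible_l1 B"
  shows "invertible_l1 (mat_mult A B)"
  using assms mat_mult_inverse[OF assms(1,2)] unfolding invertible_l1_iff by meson

lemma stochastic_op_norm_le:
  assumes "stochastic T"
  shows "op_norm_le T 1"
proof (rule op_norm_leI)
  fix y
  have "(\<lambda>x. \<bar>T x y\<bar>) = (\<lambda>x. T x y)"
    using assms unfolding stochastic_def by (intro ext abs_of_nonneg) blast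
  moreover have "((\<lambda>x. T x y) has_sum 1) UNIV" using assms unfolding stochastic_def by blast
  ultimately show "l1_norm_le (\<lambda>x. T x y) 1" by (simp add: l1_norm_le_def has_sum_iff)
qed

lemma stochastic_mat_mult:
  assumes A: "stochastic A" and B: "stochastic B"
  shows "stochastic (mat_mult A B)"
  unfolding stochastic_def
proof (intro conjI allI)
  have "0 \<le> A x z" "0 \<le> B z y" for x y z using A B unfolding stochastic_def by blast+
  then show "0 \<le> mat_mult A B x y" for x y
    unfolding mat_mult_def by (simp add: infsum_nonneg)
  fix y
  have A1: "op_norm_le A 1" and colB: "l1_norm_le (\<lambda>z. B z y) 1"
    using stochastic_op_norm_le[OF A] op_norm_leD[OF stochastic_op_norm_le[OF B]] by auto
  have "(\<Sum>\<^sub>\<infinity>x. mat_mult A B x y) = (\<Sum>\<^sub>\<infinity>z. (\<Sum>\<^sub>\<infinity>x. A x z) * B z y)"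
    unfolding mat_mult_eq_mat_vec by (rule infsum_mat_vec[OF A1 colB])
  also have "\<dots> = (\<Sum>\<^sub>\<infinity>z. B z y)"
    using A unfolding stochastic_def by (metis infsumI mult_1)
  also have "\<dots> = 1" using B unfolding stochastic_def by (blast intro: infsumI)
  finally show "((\<lambda>x. mat_mult A B x y) has_sum 1) UNIV"
    using l1_norm_le_summable[OF mat_vec_bound(2)[OF A1 colB]]
    by (simp add: has_sum_iff mat_mult_eq_mat_vec)
qed

lemma local_matI:
  fixes T :: "'d smat"
  assumes "\<beta> > 0" "\<And>x y. \<bar>T x y\<bar> \<le> c * exp (- \<beta> * real_of_int \<bar>fst x - fst y\<bar>)"
  shows "local_mat T"
  unfolding local_mat_def
proof (rule exI[of _ "max 1 c"], rule exI[of _ "1 / \<beta>"], rule exI[of _ 0], intro conjI allI impI)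
  show "0 < max 1 c" "0 < 1 / \<beta>" using assms(1) by auto
  fix i j :: int and a b :: 'd assume "\<bar>i - j\<bar> \<ge> 0"
  have "T (i, a) (j, b) \<le> c * exp (- \<beta> * real_of_int \<bar>i - j\<bar>)"
    using assms(2)[of "(i, a)" "(j, b)"] by simp
  also have "\<dots> \<le> max 1 c * exp (- \<beta> * real_of_int \<bar>i - j\<bar>)"
    by (rule mult_right_mono) auto
  also have "- \<beta> * real_of_int \<bar>i - j\<bar> = - real_of_int \<bar>i - j\<bar> / (1 / \<beta>)"
    by simp
  finally show "T (i, a) (j, b) \<le> max 1 c * exp (- real_of_int \<bar>i - j\<bar> / (1 / \<beta>))" .
qed

lemma local_stochastic_exp_decay:
  assumes loc: "local_mat T" and st: "stochastic T"
  shows "\<exists>\<beta> c. \<beta> > 0 \<and> (\<forall>x y. \<bar>T x y\<bar> \<le> c * exp (- \<beta> * real_of_int \<bar>fst x - fst y\<bar>))"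
proof -
  obtain C l N where C: "C > 0" "l > 0"
    "\<And>i a j b. \<bar>i - j\<bar> \<ge> N \<Longrightarrow> T (i, a) (j, b) \<le> C * exp (- real_of_int \<bar>i - j\<bar> / l)"
    using loc unfolding local_mat_def by blast
  define c where "c = max C (exp (real_of_int N / l))"
  have "\<bar>T (i, a) (j, b)\<bar> \<le> c * exp (- (1 / l) * real_of_int \<bar>i - j\<bar>)" for i a j b
  proof (cases "\<bar>i - j\<bar> \<ge> N")
    case True
    have "T (i, a) (j, b) \<le> C * exp (- real_of_int \<bar>i - j\<bar> / l)" by (rule C(3)[OF True])
    also have "\<dots> \<le> c * exp (- (1 / l) * real_of_int \<bar>i - j\<bar>)"
      by (simp add: c_def mult_right_mono)
    finally show ?thesis using st by (simp add: stochastic_def)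
  next
    case False
    have "\<bar>T (i, a) (j, b)\<bar> \<le> 1"
      by (rule l1_norm_le_abs_le[OF op_norm_leD[OF stochastic_op_norm_le[OF st]]])
    also have "1 \<le> exp (real_of_int N / l - real_of_int \<bar>i - j\<bar> / l)"
      using False C(2) by (simp add: divide_right_mono)
    also have "\<dots> \<le> c * exp (- (1 / l) * real_of_int \<bar>i - j\<bar>)"
      by (simp add: exp_diff exp_minus c_def field_simps)
    finally show ?thesis .
  qed
  then have "\<bar>T x y\<bar> \<le> c * exp (- (1 / l) * real_of_int \<bar>fst x - fst y\<bar>)" for x y
    by (cases x, cases y) simp
  then show ?thesis using C(2) by (intro exI[of _ "1 / l"] exI[of _ c]) simp
qed

lemma lis_mat_mat_mult:
  fixes A B :: "'d::finite smat"
  assumes A: "lis_mat A" and B: "lis_mat B"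
  shows "lis_mat (mat_mult A B)"
proof -
  have loc: "local_mat A" "local_mat B" and inv: "invertible_l1 A" "invertible_l1 B"
    and st: "stochastic A" "stochastic B"
    using A B by (simp_all add: lis_mat_def)
  obtain \<alpha> a where a: "\<alpha> > 0" "\<forall>x y. \<bar>A x y\<bar> \<le> a * exp (- \<alpha> * real_of_int \<bar>fst x - fst y\<bar>)"
    using local_stochastic_exp_decay[OF loc(1) st(1)] by blast
  obtain \<beta> b where b: "\<beta> > 0" "\<forall>x y. \<bar>B x y\<bar> \<le> b * exp (- \<beta> * real_of_int \<bar>fst x - fst y\<bar>)"
    using local_stochastic_exp_decay[OF loc(2) st(2)] by blast
  have "local_mat (mat_mult A B)"
    by (rule local_matI[OF _ exp_decay_mat_mult[OF a(1) b(1) a(2)[rule_format] b(2)[rule_format]]]) (simp add: a(1) b(1))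
  moreover have "invertible_l1 (mat_mult A B)"
    using invertible_l1_mat_mult[OF stochastic_op_norm_le[OF st(1)] stochastic_op_norm_le[OF st(2)] inv] .
  ultimately show ?thesis using stochastic_mat_mult[OF st] by (simp add: lis_mat_def)
qed

section \<open>Neumann series\<close>

lemma infsum_nat_Suc:
  fixes a :: "nat \<Rightarrow> real"
  assumes "summable (\<lambda>n. \<bar>a n\<bar>)"
  shows "(\<Sum>\<^sub>\<infinity>n. a (Suc n)) = (\<Sum>\<^sub>\<infinity>n. a n) - a 0"
proof -
  have abs_summable: "summable (\<lambda>n. norm (a n))" "summable (\<lambda>n. norm (a (Suc n)))"
    using assms summable_Suc_iff[of "\<lambda>n. norm (a n)"] by simp_all
  have "summable a" using summable_norm_cancel[OF abs_summable(1)] .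
  then have "a sums (\<Sum>\<^sub>\<infinity>n. a n)"
    using infsumI[OF norm_summable_imp_has_sum[OF abs_summable(1) summable_sums]] by (simp add: summable_sums)
  then have "(\<lambda>n. a (Suc n)) sums ((\<Sum>\<^sub>\<infinity>n. a n) - a 0)" by (simp add: sums_Suc_iff)
  then show ?thesis by (rule infsumI[OF norm_summable_imp_has_sum[OF abs_summable(2)]])
qed

lemma geometric_infsum_le_2:
  assumes "0 \<le> (\<theta>::real)" "\<theta> \<le> 1 / 2"
  shows "(\<lambda>n::nat. \<theta> ^ n) summable_on UNIV" "(\<Sum>\<^sub>\<infinity>n::nat. \<theta> ^ n) \<le> 2"
proof -
  have "((\<lambda>n::nat. \<theta> ^ n) has_sum 1 / (1 - \<theta>)) UNIV"
    using assms by (intro norm_summable_imp_has_sum geometric_sums) (auto intro: summable_geometric)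
  moreover have "1 / (1 - \<theta>) \<le> 2" using assms by (simp add: field_simps)
  ultimately show "(\<lambda>n::nat. \<theta> ^ n) summable_on UNIV" "(\<Sum>\<^sub>\<infinity>n::nat. \<theta> ^ n) \<le> 2"
    by (auto simp: has_sum_iff)
qed

primrec mat_pow :: "'d smat \<Rightarrow> nat \<Rightarrow> 'd smat" where
  "mat_pow X 0 = id_mat"
| "mat_pow X (Suc n) = mat_mult X (mat_pow X n)"

lemma op_norm_le_mat_pow: "op_norm_le X \<theta> \<Longrightarrow> op_norm_le (mat_pow X n) (\<theta> ^ n)"
  by (induction n) (simp_all add: op_norm_le_id op_norm_le_mat_mult)

lemma mat_pow_Suc_right:
  assumes "op_norm_le X \<theta>"
  shows "mat_pow X (Suc n) = mat_mult (mat_pow X n) X"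
proof (induction n)
  case 0
  then show ?case by (simp add: mat_mult_id_left mat_mult_id_right)
next
  case (Suc n)
  have "mat_pow X (Suc (Suc n)) = mat_mult X (mat_mult (mat_pow X n) X)" using Suc by simp
  also have "\<dots> = mat_mult (mat_mult X (mat_pow X n)) X"
    by (rule mat_mult_assoc[OF assms op_norm_le_mat_pow[OF assms] assms, symmetric])
  finally show ?case by simp
qed

definition neumann_sum :: "'d smat \<Rightarrow> 'd smat" where
  "neumann_sum X x y = (\<Sum>\<^sub>\<infinity>n. mat_pow X n x y)"

context
  fixes X :: "'d smat" and \<theta> :: real
  assumes X: "op_norm_le X \<theta>" and \<theta>: "\<theta> \<le> 1 / 2"
begin

lemma neumann_bounds:
  shows "0 \<le> \<theta>" and "l1_norm_le (\<lambda>x. mat_pow X n x y) (\<theta> ^ n)" and "\<bar>mat_pow X n x y\<bar> \<le> \<theta> ^ n"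
    and "(\<lambda>n. \<theta> ^ n) summable_on UNIV" and "(\<Sum>\<^sub>\<infinity>n. \<theta> ^ n) \<le> 2"
    and "(\<lambda>n. \<theta> * \<theta> ^ n) summable_on UNIV"
proof -
  show \<theta>0: "0 \<le> \<theta>" by (rule l1_norm_le_nonneg[OF op_norm_leD[OF X]])
  show col: "l1_norm_le (\<lambda>x. mat_pow X n x y) (\<theta> ^ n)" for n y
    by (rule op_norm_leD[OF op_norm_le_mat_pow[OF X]])
  show "\<bar>mat_pow X n x y\<bar> \<le> \<theta> ^ n" by (rule l1_norm_le_abs_le[OF col])
  show geometric: "(\<lambda>n. \<theta> ^ n) summable_on UNIV" "(\<Sum>\<^sub>\<infinity>n. \<theta> ^ n) \<le> 2"
    by (rule geometric_infsum_le_2[OF \<theta>0 \<theta>])+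
  show "(\<lambda>n. \<theta> * \<theta> ^ n) summable_on UNIV" by (rule summable_on_cmult_right[OF geometric(1)])
qed

lemma neumann_sum_shift: "(\<Sum>\<^sub>\<infinity>n. mat_pow X (Suc n) x y) = neumann_sum X x y - id_mat x y"
proof -
  have "summable (\<lambda>n. \<bar>mat_pow X n x y\<bar>)"
    by (rule summable_comparison_test[of _ "\<lambda>n. \<theta> ^ n"])
       (use neumann_bounds(1,3) \<theta> in \<open>auto intro: summable_geometric\<close>)
  from infsum_nat_Suc[OF this] show ?thesis by (simp add: neumann_sum_def del: mat_pow.simps(2))
qed

lemma op_norm_le_neumann_sum: "op_norm_le (neumann_sum X) 2"
proof (rule op_norm_leI)
  fix y
  have inner: "(\<lambda>x. \<bar>\<bar>mat_pow X n x y\<bar>\<bar>) summable_on UNIV" for n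
    using neumann_bounds(2)[of n y] by (simp add: l1_norm_le_def)
  have outer: "(\<lambda>n. \<Sum>\<^sub>\<infinity>x. \<bar>\<bar>mat_pow X n x y\<bar>\<bar>) summable_on UNIV"
    by (rule summable_on_comparison_test[OF neumann_bounds(4)])
       (use neumann_bounds(2) in \<open>auto simp: l1_norm_le_def intro: infsum_nonneg\<close>)
  note swap = infsum_swap_abs[OF inner outer, simplified]
  have S_le: "\<bar>neumann_sum X x y\<bar> \<le> (\<Sum>\<^sub>\<infinity>n. \<bar>mat_pow X n x y\<bar>)" for x
    unfolding neumann_sum_def by (rule abs_infsum_le_infsum_abs) (use swap(1) in simp)
  have summable: "(\<lambda>x. \<bar>neumann_sum X x y\<bar>) summable_on UNIV"
    by (rule summable_on_comparison_test[OF swap(2)]) (use S_le in auto)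
  have "(\<Sum>\<^sub>\<infinity>x. \<bar>neumann_sum X x y\<bar>) \<le> (\<Sum>\<^sub>\<infinity>x. \<Sum>\<^sub>\<infinity>n. \<bar>mat_pow X n x y\<bar>)"
    by (rule infsum_mono[OF summable swap(2)]) (use S_le in auto)
  also have "\<dots> = (\<Sum>\<^sub>\<infinity>n. \<Sum>\<^sub>\<infinity>x. \<bar>mat_pow X n x y\<bar>)" by (rule swap(3)[symmetric])
  also have "\<dots> \<le> (\<Sum>\<^sub>\<infinity>n. \<theta> ^ n)"
    by (rule infsum_mono[OF _ neumann_bounds(4)])
       (use outer neumann_bounds(2) in \<open>auto simp: l1_norm_le_def\<close>)
  finally show "l1_norm_le (\<lambda>x. neumann_sum X x y) 2"
    using summable neumann_bounds(5) by (simp add: l1_norm_le_def)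
qed

lemma mat_vec_neumann_sum: "mat_vec X (\<lambda>z. neumann_sum X z y) x = neumann_sum X x y - id_mat x y"
proof -
  define f where "f n z = X x z * mat_pow X n z y" for n z
  have row: "l1_norm_le (f n) (\<theta> * \<theta> ^ n)" for n
    unfolding f_def
    by (rule l1_norm_le_mult_bounded[OF l1_norm_le_abs_le[OF op_norm_leD[OF X]] neumann_bounds(2)])
  have outer: "(\<lambda>n. \<Sum>\<^sub>\<infinity>z. \<bar>f n z\<bar>) summable_on UNIV"
    by (rule summable_on_comparison_test[OF neumann_bounds(6)])
       (use row in \<open>auto simp: l1_norm_le_def intro: infsum_nonneg\<close>)
  have "mat_vec X (\<lambda>z. neumann_sum X z y) x = (\<Sum>\<^sub>\<infinity>z. \<Sum>\<^sub>\<infinity>n. f n z)"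
    by (simp add: mat_vec_def neumann_sum_def f_def infsum_cmult_right')
  also have "\<dots> = (\<Sum>\<^sub>\<infinity>n. \<Sum>\<^sub>\<infinity>z. f n z)"
    using row by (intro infsum_swap_abs(3)[OF _ outer, symmetric]) (simp add: l1_norm_le_def)
  also have "\<dots> = (\<Sum>\<^sub>\<infinity>n. mat_pow X (Suc n) x y)" by (simp add: f_def mat_mult_def)
  finally show ?thesis using neumann_sum_shift by simp
qed

lemma mat_vec_neumann_sum_right: "mat_vec (neumann_sum X) (\<lambda>z. X z y) x = neumann_sum X x y - id_mat x y"
proof -
  define f where "f n z = mat_pow X n x z * X z y" for n z
  have row: "l1_norm_le (f n) (\<theta> ^ n * \<theta>)" for n
    unfolding f_def by (rule l1_norm_le_mult_bounded[OF neumann_bounds(3) op_norm_leD[OF X]])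
  have outer: "(\<lambda>n. \<Sum>\<^sub>\<infinity>z. \<bar>f n z\<bar>) summable_on UNIV"
    by (rule summable_on_comparison_test[OF neumann_bounds(6)])
       (use row in \<open>auto simp: l1_norm_le_def mult.commute intro: infsum_nonneg\<close>)
  have "mat_vec (neumann_sum X) (\<lambda>z. X z y) x = (\<Sum>\<^sub>\<infinity>z. \<Sum>\<^sub>\<infinity>n. f n z)"
    by (simp add: mat_vec_def neumann_sum_def f_def infsum_cmult_left')
  also have "\<dots> = (\<Sum>\<^sub>\<infinity>n. \<Sum>\<^sub>\<infinity>z. f n z)"
    using row by (intro infsum_swap_abs(3)[OF _ outer, symmetric]) (simp add: l1_norm_le_def)
  also have "\<dots> = (\<Sum>\<^sub>\<infinity>n. mat_pow X (Suc n) x y)"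
    by (simp add: f_def mat_mult_def mat_pow_Suc_right[OF X] del: mat_pow.simps)
  finally show ?thesis using neumann_sum_shift by simp
qed

end

lemma invertible_near_id:
  fixes E :: "'d smat"
  assumes near: "op_norm_le (\<lambda>x y. id_mat x y - E x y) \<theta>" and \<theta>: "\<theta> \<le> 1 / 2"
  shows "\<exists>S. op_norm_le S 2 \<and> mat_mult S E = id_mat \<and> mat_mult E S = id_mat"
proof -
  define X where "X x y = id_mat x y - E x y" for x y
  have X: "op_norm_le X \<theta>" using near by (simp add: X_def[abs_def])
  have E_eq: "E = (\<lambda>x y. id_mat x y - X x y)" by (simp add: X_def)
  define S where "S = neumann_sum X"
  have S: "op_norm_le S 2" unfolding S_def by (rule op_norm_le_neumann_sum[OF X \<theta>])
  have "mat_mult S E x y = id_mat x y" for x y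
  proof -
    have "mat_mult S E x y = mat_vec S (\<lambda>z. id_mat z y) x - mat_vec S (\<lambda>z. X z y) x"
      unfolding E_eq mat_mult_eq_mat_vec
      by (rule mat_vec_diff[OF S op_norm_leD[OF op_norm_le_id] op_norm_leD[OF X]])
    also have "mat_vec S (\<lambda>z. id_mat z y) x = S x y"
      using mat_vec_single[of S y x] by (simp add: id_mat_def)
    finally show ?thesis using mat_vec_neumann_sum_right[OF X \<theta>] by (simp add: S_def)
  qed
  moreover have "mat_mult E S x y = id_mat x y" for x y
  proof -
    have "mat_mult E S x y = mat_vec id_mat (\<lambda>z. S z y) x - mat_vec X (\<lambda>z. S z y) x"
      unfolding E_eq mat_mult_eq_mat_vec
      by (rule mat_vec_diff_left[OF op_norm_le_id X op_norm_leD[OF S]])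
    then show ?thesis using mat_vec_neumann_sum[OF X \<theta>] by (simp add: mat_vec_id S_def)
  qed
  ultimately show ?thesis using S by blast
qed

section \<open>A Gronwall inequality in weighted l1 norms\<close>

lemma wnorm_nonneg: "(\<And>x. 0 \<le> w x) \<Longrightarrow> 0 \<le> wnorm w u"
  unfolding wnorm_def by (simp add: infsum_nonneg)

lemma wnorm_summable:
  fixes w u :: "'s \<Rightarrow> real"
  assumes "\<And>x. 0 \<le> w x" "\<And>x. w x \<le> W" "(\<lambda>x. \<bar>u x\<bar>) summable_on UNIV"
  shows "(\<lambda>x. w x * \<bar>u x\<bar>) summable_on UNIV"
  by (rule summable_on_comparison_test[OF summable_on_cmult_right[OF assms(3), of W]])
     (use assms(1,2) in \<open>auto intro: mult_right_mono\<close>)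

lemma wnorm_le_l1:
  fixes w u :: "'s \<Rightarrow> real"
  assumes "\<And>x. 0 \<le> w x" "\<And>x. w x \<le> W" "(\<lambda>x. \<bar>u x\<bar>) summable_on UNIV"
  shows "wnorm w u \<le> W * (\<Sum>\<^sub>\<infinity>x. \<bar>u x\<bar>)"
  unfolding wnorm_def infsum_cmult_right'[symmetric]
  by (rule infsum_mono[OF wnorm_summable[OF assms] summable_on_cmult_right[OF assms(3)]])
     (use assms(2) in \<open>auto intro: mult_right_mono\<close>)

lemma wnorm_le_add:
  assumes "\<And>x. 0 \<le> w x" "\<And>x. \<bar>u x\<bar> \<le> \<bar>u1 x\<bar> + \<bar>u2 x\<bar>"
    and "(\<lambda>x. w x * \<bar>u1 x\<bar>) summable_on UNIV" "(\<lambda>x. w x * \<bar>u2 x\<bar>) summable_on UNIV"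
  shows "(\<lambda>x. w x * \<bar>u x\<bar>) summable_on UNIV" "wnorm w u \<le> wnorm w u1 + wnorm w u2"
proof -
  have le: "w x * \<bar>u x\<bar> \<le> w x * \<bar>u1 x\<bar> + w x * \<bar>u2 x\<bar>" for x
    using mult_left_mono[OF assms(2) assms(1)] by (simp add: algebra_simps)
  have sum: "(\<lambda>x. w x * \<bar>u1 x\<bar> + w x * \<bar>u2 x\<bar>) summable_on UNIV"
    by (rule summable_on_add[OF assms(3,4)])
  show summable: "(\<lambda>x. w x * \<bar>u x\<bar>) summable_on UNIV"
    by (rule summable_on_comparison_test[OF sum]) (use le assms(1) in auto)
  have "wnorm w u \<le> (\<Sum>\<^sub>\<infinity>x. w x * \<bar>u1 x\<bar> + w x * \<bar>u2 x\<bar>)"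
    unfolding wnorm_def by (rule infsum_mono[OF summable sum le])
  then show "wnorm w u \<le> wnorm w u1 + wnorm w u2"
    by (simp add: wnorm_def infsum_add[OF assms(3,4)])
qed

definition continuous_on_l1 :: "real set \<Rightarrow> (real \<Rightarrow> 's \<Rightarrow> real) \<Rightarrow> bool" where
  "continuous_on_l1 S v \<longleftrightarrow>
     (\<forall>s\<in>S. \<forall>e>0. \<exists>d>0. \<forall>s'\<in>S. \<bar>s' - s\<bar> < d \<longrightarrow> l1_norm_le (\<lambda>x. v s' x - v s x) e)"

definition has_right_deriv_l1 :: "real \<Rightarrow> (real \<Rightarrow> 's \<Rightarrow> real) \<Rightarrow> ('s \<Rightarrow> real) \<Rightarrow> real \<Rightarrow> bool" where
  "has_right_deriv_l1 b v w s \<longleftrightarrow> (\<forall>e>0. \<exists>d>0. \<forall>h. 0 < h \<and> h < d \<and> s + h \<le> b \<longrightarrow>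
     l1_norm_le (\<lambda>x. v (s + h) x - v s x - h * w x) (h * e))"

lemma continuous_on_infsum_lipschitz:
  fixes v :: "real \<Rightarrow> 's \<Rightarrow> real"
  assumes summable: "\<And>s. s \<in> S \<Longrightarrow> (\<lambda>x. \<phi> x (v s x)) summable_on UNIV"
    and lipschitz: "\<And>x a b. \<bar>\<phi> x a - \<phi> x b\<bar> \<le> L * \<bar>a - b\<bar>"
    and cont: "continuous_on_l1 S v"
  shows "continuous_on S (\<lambda>s. \<Sum>\<^sub>\<infinity>x. \<phi> x (v s x))"
  unfolding continuous_on_iff
proof (intro ballI allI impI)
  fix s e assume s: "s \<in> S" and e: "(e::real) > 0"
  have L0: "0 \<le> L" using lipschitz[of undefined 1 0] by simp
  then have "e / (L + 1) > 0" using e by simp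
  then obtain d where d: "d > 0" "\<forall>s'\<in>S. \<bar>s' - s\<bar> < d \<longrightarrow> l1_norm_le (\<lambda>x. v s' x - v s x) (e / (L + 1))"
    using cont s unfolding continuous_on_l1_def by blast
  have "dist (\<Sum>\<^sub>\<infinity>x. \<phi> x (v s' x)) (\<Sum>\<^sub>\<infinity>x. \<phi> x (v s x)) < e" if s': "s' \<in> S" "dist s' s < d" for s'
  proof -
    have diff: "l1_norm_le (\<lambda>x. v s' x - v s x) (e / (L + 1))" using d s' by (auto simp: dist_real_def)
    have "\<bar>(\<Sum>\<^sub>\<infinity>x. \<phi> x (v s' x)) - (\<Sum>\<^sub>\<infinity>x. \<phi> x (v s x))\<bar>
        = \<bar>\<Sum>\<^sub>\<infinity>x. \<phi> x (v s' x) - \<phi> x (v s x)\<bar>"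
      by (simp add: infsum_diff[OF summable[OF s'(1)] summable[OF s]])
    also have "\<dots> \<le> (\<Sum>\<^sub>\<infinity>x. L * \<bar>v s' x - v s x\<bar>)"
      by (rule abs_infsum_le) (use diff lipschitz in \<open>auto simp: l1_norm_le_def intro: summable_on_cmult_right\<close>)
    also have "\<dots> \<le> L * (e / (L + 1))"
      using diff mult_left_mono[OF _ L0] unfolding l1_norm_le_def infsum_cmult_right' by blast
    also have "\<dots> < e" using L0 e by (simp add: field_simps)
    finally show ?thesis by (simp add: dist_real_def)
  qed
  then show "\<exists>d>0. \<forall>s'\<in>S. dist s' s < d \<longrightarrow> dist (\<Sum>\<^sub>\<infinity>x. \<phi> x (v s' x)) (\<Sum>\<^sub>\<infinity>x. \<phi> x (v s x)) < e"
    using d(1) by blast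
qed

lemma continuous_on_wnorm_diff:
  assumes w: "\<And>x. 0 \<le> w x" "\<And>x. w x \<le> W"
    and summable: "\<And>s. s \<in> S \<Longrightarrow> (\<lambda>x. w x * \<bar>v s x - c x\<bar>) summable_on UNIV"
    and cont: "continuous_on_l1 S v"
  shows "continuous_on S (\<lambda>s. wnorm w (\<lambda>x. v s x - c x))"
  unfolding wnorm_def
proof (rule continuous_on_infsum_lipschitz[where \<phi>="\<lambda>x p. w x * \<bar>p - c x\<bar>" and v=v, OF summable _ cont])
  show "\<bar>w x * \<bar>p - c x\<bar> - w x * \<bar>q - c x\<bar>\<bar> \<le> W * \<bar>p - q\<bar>" for x p q
  proof -
    have "\<bar>w x * \<bar>p - c x\<bar> - w x * \<bar>q - c x\<bar>\<bar> = w x * \<bar>\<bar>p - c x\<bar> - \<bar>q - c x\<bar>\<bar>"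
      using w(1)[of x] by (simp add: abs_mult right_diff_distrib[symmetric])
    also have "\<dots> \<le> W * \<bar>p - q\<bar>"
      using w[of x] by (intro mult_mono) (auto simp: abs_triangle_ineq3)
    finally show ?thesis .
  qed
qed

lemma wnorm_euler_step:
  fixes u u' r c :: "'s \<Rightarrow> real"
  assumes w: "\<And>x. 0 \<le> w x" "\<And>x. w x \<le> W" and h: "0 \<le> h"
    and u: "(\<lambda>x. w x * \<bar>u x - c x\<bar>) summable_on UNIV" and r: "(\<lambda>x. w x * \<bar>r x\<bar>) summable_on UNIV"
    and err: "l1_norm_le (\<lambda>x. u' x - u x - h * r x) \<epsilon>"
  shows "wnorm w (\<lambda>x. u' x - c x) \<le> wnorm w (\<lambda>x. u x - c x) + h * wnorm w r + W * \<epsilon>"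
proof -
  define err where "err x = u' x - u x - h * r x" for x
  have W: "0 \<le> W" using w[of undefined] by linarith
  have err_summable: "(\<lambda>x. w x * \<bar>err x\<bar>) summable_on UNIV"
    using err by (intro wnorm_summable[of w W, OF w]) (simp add: l1_norm_le_def err_def)
  have "wnorm w err \<le> W * (\<Sum>\<^sub>\<infinity>x. \<bar>err x\<bar>)"
    by (rule wnorm_le_l1[of w W err, OF w]) (use err in \<open>simp add: l1_norm_le_def err_def\<close>)
  also have "\<dots> \<le> W * \<epsilon>" using err W by (intro mult_left_mono) (simp_all add: l1_norm_le_def err_def)
  finally have err_le: "wnorm w err \<le> W * \<epsilon>" .
  have hr: "(\<lambda>x. w x * \<bar>h * r x\<bar>) summable_on UNIV" "wnorm w (\<lambda>x. h * r x) = h * wnorm w r"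
    using summable_on_cmult_right[OF r, of h] h
    by (simp_all add: wnorm_def abs_mult infsum_cmult_right'[symmetric] algebra_simps)
  note incr = wnorm_le_add[of w "\<lambda>x. h * r x + err x" "\<lambda>x. h * r x" err,
      OF w(1) abs_triangle_ineq hr(1) err_summable]
  have "wnorm w (\<lambda>x. u' x - c x) \<le> wnorm w (\<lambda>x. u x - c x) + wnorm w (\<lambda>x. h * r x + err x)"
    by (rule wnorm_le_add(2)[OF w(1) _ u incr(1)]) (auto simp: err_def abs_triangle_ineq[THEN order_trans])
  then show ?thesis using incr(2) hr(2) err_le by linarith
qed

text \<open>The constant wnorm w c is added because the growth of wnorm w (v - c) is controlled
  by wnorm w v, which is at most wnorm w (v - c) + wnorm w c.\<close>
lemma weighted_gronwall:
  fixes v :: "real \<Rightarrow> 's \<Rightarrow> real" and R :: "real \<Rightarrow> 's \<Rightarrow> 's \<Rightarrow> real"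
  assumes ab: "a \<le> b" and K: "finite K" and \<rho>: "\<rho> \<ge> 0"
    and w: "\<And>x. 0 \<le> w x" "\<And>x. w x \<le> W"
    and v_summable: "\<And>s. s \<in> {a..b} \<Longrightarrow> (\<lambda>x. \<bar>v s x\<bar>) summable_on UNIV"
    and c_summable: "(\<lambda>x. \<bar>c x\<bar>) summable_on UNIV"
    and cont: "continuous_on_l1 {a..b} v"
    and deriv: "\<And>s. s \<in> {a..<b} - K \<Longrightarrow> has_right_deriv_l1 b v (mat_vec (R s) (v s)) s"
    and R: "\<And>s u. s \<in> {a..b} \<Longrightarrow> (\<lambda>x. w x * \<bar>u x\<bar>) summable_on UNIV \<Longrightarrow>
      (\<lambda>x. w x * \<bar>mat_vec (R s) u x\<bar>) summable_on UNIV \<and> wnorm w (mat_vec (R s) u) \<le> \<rho> * wnorm w u"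
  shows "wnorm w (\<lambda>x. v b x - c x) + wnorm w c
    \<le> (wnorm w (\<lambda>x. v a x - c x) + wnorm w c) * exp (\<rho> * (b - a))"
proof -
  define f where "f s = wnorm w (\<lambda>x. v s x - c x) + wnorm w c" for s
  have W: "0 \<le> W" using w[of undefined] by linarith
  have summable: "(\<lambda>x. w x * \<bar>v s x - c x\<bar>) summable_on UNIV" if "s \<in> {a..b}" for s
  proof -
    have "(\<lambda>x. v s x - c x) summable_on UNIV"
      by (rule summable_on_diff) (use v_summable[OF that] c_summable in \<open>simp_all add: abs_summable_on_iff_real\<close>)
    then show ?thesis by (intro wnorm_summable[of w W, OF w]) (simp_all add: abs_summable_on_iff_real)
  qed
  have v_le: "wnorm w (v s) \<le> f s" "(\<lambda>x. w x * \<bar>v s x\<bar>) summable_on UNIV" if "s \<in> {a..b}" for s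
    using wnorm_le_add[OF w(1) _ summable[OF that] wnorm_summable[of w W, OF w c_summable], of "v s"]
    by (auto simp: f_def)
  have "f b \<le> f a * exp (\<rho> * (b - a))"
  proof (rule gronwall_upper_right_deriv[OF ab _ K \<rho>])
    show "continuous_on {a..b} f"
      unfolding f_def by (intro continuous_intros continuous_on_wnorm_diff[OF w summable cont])
    show "0 \<le> f t" for t unfolding f_def using wnorm_nonneg[of w, OF w(1)] by (simp add: add_nonneg_nonneg)
    show "upper_right_deriv_le b f s (\<rho> * f s)" if s: "s \<in> {a..<b} - K" for s
      unfolding upper_right_deriv_le_def
    proof (intro allI impI)
      fix e :: real assume e: "e > 0"
      have s': "s \<in> {a..b}" using s by auto
      have "e / (W + 1) > 0" using e W by simp
      from deriv[OF s, unfolded has_right_deriv_l1_def, rule_format, OF this]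
      obtain d where d: "d > 0" "\<forall>h. 0 < h \<and> h < d \<and> s + h \<le> b \<longrightarrow>
          l1_norm_le (\<lambda>x. v (s + h) x - v s x - h * mat_vec (R s) (v s) x) (h * (e / (W + 1)))"
        by blast
      have Rv: "(\<lambda>x. w x * \<bar>mat_vec (R s) (v s) x\<bar>) summable_on UNIV"
          "wnorm w (mat_vec (R s) (v s)) \<le> \<rho> * f s"
        using R[OF s' v_le(2)[OF s']] mult_left_mono[OF v_le(1)[OF s'] \<rho>] by auto
      have "f (s + h) \<le> f s + h * (\<rho> * f s + e)" if h: "0 < h" "h < d" "s + h \<le> b" for h
      proof -
        have "wnorm w (\<lambda>x. v (s + h) x - c x)
            \<le> wnorm w (\<lambda>x. v s x - c x) + h * wnorm w (mat_vec (R s) (v s)) + W * (h * (e / (W + 1)))"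
          using d h by (intro wnorm_euler_step[OF w _ summable[OF s'] Rv(1)]) auto
        moreover have "h * wnorm w (mat_vec (R s) (v s)) \<le> h * (\<rho> * f s)"
          using Rv(2) h by (intro mult_left_mono) auto
        moreover have "W * (h * (e / (W + 1))) \<le> h * e" using W h e by (simp add: field_simps)
        ultimately show ?thesis by (simp add: f_def algebra_simps)
      qed
      then show "\<exists>d>0. \<forall>h. 0 < h \<and> h < d \<and> s + h \<le> b \<longrightarrow> f (s + h) \<le> f s + h * (\<rho> * f s + e)"
        using d(1) by blast
    qed
  qed
  then show ?thesis by (simp add: f_def)
qed

section \<open>Solutions of local master equations\<close>

text \<open>The condition on h makes I + hA entrywise nonnegative.\<close>
lemma neg_part_euler_step:
  assumes A: "op_norm_le A a" and v: "l1_norm_le v b"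
    and off_diag: "\<And>z. z \<noteq> x \<Longrightarrow> 0 \<le> A x z" and h: "0 \<le> h" "h * \<bar>A x x\<bar> \<le> 1"
  shows "max 0 (- (v x + h * mat_vec A v x)) \<le> max 0 (- v x) + h * mat_vec A (\<lambda>z. max 0 (- v z)) x"
proof -
  define p n where "p z = max 0 (v z)" and "n z = max 0 (- v z)" for z
  have p: "l1_norm_le p b" and n: "l1_norm_le n b"
    using v by (auto simp: p_def n_def intro: l1_norm_le_comparison)
  have "v = (\<lambda>z. p z - n z)" by (auto simp: p_def n_def)
  then have Av: "mat_vec A v x = mat_vec A p x - mat_vec A n x"
    using mat_vec_diff[OF A p n] by simp
  have "h * (- \<bar>A x x\<bar>) \<le> h * A x x" by (rule mult_left_mono) (use h(1) in auto)
  then have diag: "0 \<le> 1 + h * A x x" using h(2) by simp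
  have step: "0 \<le> q x + h * mat_vec A q x" if q: "l1_norm_le q b" "\<And>z. 0 \<le> q z" for q
  proof -
    have "0 \<le> q x * (1 + h * A x x)" using q(2) diag by simp
    also have "\<dots> = q x + h * (A x x * q x)" by (simp add: algebra_simps)
    also have "\<dots> \<le> q x + h * mat_vec A q x"
      using mult_left_mono[OF mat_vec_ge_diag[OF A q(1) q(2) off_diag] h(1)] by simp
    finally show ?thesis .
  qed
  have p_step: "0 \<le> p x + h * mat_vec A p x" and n_step: "0 \<le> n x + h * mat_vec A n x"
    by (rule step[OF p], simp add: p_def) (rule step[OF n], simp add: n_def)
  have "v x = p x - n x" by (simp add: p_def n_def)
  then have "- (v x + h * mat_vec A v x) \<le> n x + h * mat_vec A n x"
    using p_step by (simp add: Av right_diff_distrib)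
  then show ?thesis using n_step unfolding n_def[abs_def] by simp
qed

locale master_equation_solution =
  fixes \<tau> C l :: real and K :: "real set" and R P :: "real \<Rightarrow> ('d::finite) smat"
  assumes tau_nonneg: "0 \<le> \<tau>" and C_pos: "0 < C" and l_pos: "0 < l" and finite_K: "finite K"
    and P_0: "P 0 = id_mat"
    and P_continuous: "mat_continuous_on {0..\<tau>} P"
    and P_deriv: "\<forall>s\<in>{0..\<tau>} - K. \<forall>e>0. \<exists>d>0. \<forall>h. h \<noteq> 0 \<and> \<bar>h\<bar> < d \<and> s + h \<in> {0..\<tau>} \<longrightarrow>
      mat_close (\<lambda>x y. (P (s + h) x y - P s x y) / h) (mat_mult (R s) (P s)) e"
    and R_rate: "\<forall>t\<in>{0..\<tau>}. rate_mat (R t)"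
    and R_local: "\<forall>t\<in>{0..\<tau>}. \<forall>i a j b. \<bar>R t (i, a) (j, b)\<bar> \<le> C * exp (- real_of_int \<bar>i - j\<bar> / l)"
begin

definition \<mu> :: real where "\<mu> = 1 / (2 * l)"

definition \<rho> :: real where "\<rho> = C * real CARD('d) * exp_decay_sum \<mu>"

text \<open>Truncating the weight exp(\<mu> |i - j|) at distance L keeps it bounded, so the weighted
  norms below are finite a priori; taking L = |i - j| at the end gives exponential decay.\<close>
definition weight :: "real \<Rightarrow> int \<times> 'd \<Rightarrow> int \<times> 'd \<Rightarrow> real" where
  "weight L x z = exp (\<mu> * min (real_of_int \<bar>fst x - fst z\<bar>) L)"

lemma \<mu>_pos: "0 < \<mu>"
  using l_pos by (simp add: \<mu>_def)

lemma \<rho>_nonneg: "0 \<le> \<rho>"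
  unfolding \<rho>_def using C_pos exp_decay_sum_nonneg by simp

lemma R_exp_decay:
  assumes "t \<in> {0..\<tau>}"
  shows "\<bar>R t x z\<bar> \<le> C * exp (- (2 * \<mu>) * real_of_int \<bar>fst x - fst z\<bar>)"
  using R_local assms l_pos by (cases x, cases z) (simp add: \<mu>_def)

lemma weight_ge_1: "0 \<le> L \<Longrightarrow> 1 \<le> weight L x z"
  unfolding weight_def using \<mu>_pos by simp

lemma weight_le_exp: "weight L x z \<le> exp (\<mu> * real_of_int \<bar>fst x - fst z\<bar>)"
  unfolding weight_def using \<mu>_pos by simp

lemma weight_le_exp_L: "weight L x z \<le> exp (\<mu> * L)"
  unfolding weight_def using \<mu>_pos by simp

lemma weight_self: "0 \<le> L \<Longrightarrow> weight L x x = 1"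
  unfolding weight_def by simp

lemma weight_0: "weight 0 x z = 1"
  unfolding weight_def by simp

lemma weight_submult:
  assumes "0 \<le> L"
  shows "weight L x y \<le> weight L x z * weight L z y"
proof -
  have "min (real_of_int \<bar>fst x - fst y\<bar>) L
      \<le> min (real_of_int \<bar>fst x - fst z\<bar>) L + min (real_of_int \<bar>fst z - fst y\<bar>) L"
    using assms by linarith
  then show ?thesis
    unfolding weight_def exp_add[symmetric] using \<mu>_pos by (simp add: distrib_left[symmetric])
qed

lemma R_weighted_col:
  assumes t: "t \<in> {0..\<tau>}"
  shows "(\<lambda>x. weight L x z * \<bar>R t x z\<bar>) summable_on UNIV"
    and "wnorm (\<lambda>x. weight L x z) (\<lambda>x. R t x z) \<le> \<rho>"
proof -
  have le: "weight L x z * \<bar>R t x z\<bar> \<le> C * exp (- \<mu> * real_of_int \<bar>fst x - fst z\<bar>)" for x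
  proof -
    have "weight L x z * \<bar>R t x z\<bar>
        \<le> exp (\<mu> * real_of_int \<bar>fst x - fst z\<bar>) * (C * exp (- (2 * \<mu>) * real_of_int \<bar>fst x - fst z\<bar>))"
      by (rule mult_mono[OF weight_le_exp R_exp_decay[OF t]]) auto
    then show ?thesis by (simp add: exp_add[symmetric] algebra_simps)
  qed
  have bound_summable: "(\<lambda>x::int \<times> 'd. C * exp (- \<mu> * real_of_int \<bar>fst x - fst z\<bar>)) summable_on UNIV"
    by (rule summable_on_cmult_right[OF exp_decay_sum_states(1)[OF \<mu>_pos]])
  show summable: "(\<lambda>x. weight L x z * \<bar>R t x z\<bar>) summable_on UNIV"
    by (rule summable_on_comparison_test[OF bound_summable]) (use le in \<open>auto simp: weight_def\<close>)
  have "wnorm (\<lambda>x. weight L x z) (\<lambda>x. R t x z)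
      \<le> (\<Sum>\<^sub>\<infinity>x::int \<times> 'd. C * exp (- \<mu> * real_of_int \<bar>fst x - fst z\<bar>))"
    unfolding wnorm_def by (rule infsum_mono[OF summable bound_summable le])
  also have "\<dots> = \<rho>"
    by (simp only: \<rho>_def infsum_cmult_right' exp_decay_sum_states(2)[OF \<mu>_pos] mult.assoc)
  finally show "wnorm (\<lambda>x. weight L x z) (\<lambda>x. R t x z) \<le> \<rho>" .
qed

lemma op_norm_le_R: "t \<in> {0..\<tau>} \<Longrightarrow> op_norm_le (R t) \<rho>"
  using R_weighted_col[of t 0] by (simp add: op_norm_le_def l1_norm_le_def wnorm_def weight_0)

lemma R_weighted_mat_vec:
  assumes t: "t \<in> {0..\<tau>}" and L: "0 \<le> L"
    and u: "(\<lambda>z. weight L z y * \<bar>u z\<bar>) summable_on UNIV"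
  shows "(\<lambda>x. weight L x y * \<bar>mat_vec (R t) u x\<bar>) summable_on UNIV \<and>
    wnorm (\<lambda>x. weight L x y) (mat_vec (R t) u) \<le> \<rho> * wnorm (\<lambda>z. weight L z y) u"
  using weighted_schur_bound(2,3)[OF R_weighted_col(1)[OF t] R_weighted_col(2)[OF t] u order_refl
      weight_ge_1[OF L] weight_ge_1[OF L] weight_submult[OF L]] L
  by (auto simp: weight_def)

lemma P_mat_deriv:
  assumes s: "s \<in> {0..\<tau>} - K" and e: "e > 0"
  shows "\<exists>d>0. \<forall>h. 0 < h \<and> h < d \<and> s + h \<le> \<tau> \<longrightarrow>
    op_norm_le (\<lambda>x z. P (s + h) x z - P s x z - h * mat_mult (R s) (P s) x z) (h * e)"
proof -
  obtain d where d: "d > 0" "\<forall>h. h \<noteq> 0 \<and> \<bar>h\<bar> < d \<and> s + h \<in> {0..\<tau>} \<longrightarrow>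
      mat_close (\<lambda>x y. (P (s + h) x y - P s x y) / h) (mat_mult (R s) (P s)) e"
    using P_deriv[rule_format, OF s e] by blast
  have "op_norm_le (\<lambda>x z. P (s + h) x z - P s x z - h * mat_mult (R s) (P s) x z) (h * e)"
    if h: "0 < h" "h < d" "s + h \<le> \<tau>" for h
  proof (rule op_norm_leI)
    fix y
    have "mat_close (\<lambda>x y. (P (s + h) x y - P s x y) / h) (mat_mult (R s) (P s)) e"
      using h s by (intro d(2)[rule_format]) auto
    then have "l1_norm_le (\<lambda>x. h * ((P (s + h) x y - P s x y) / h - mat_mult (R s) (P s) x y)) (\<bar>h\<bar> * e)"
      unfolding mat_close_iff_op_norm_le by (intro l1_norm_le_scale op_norm_leD)
    moreover have "h * ((P (s + h) x y - P s x y) / h - mat_mult (R s) (P s) x y)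
        = P (s + h) x y - P s x y - h * mat_mult (R s) (P s) x y" for x
      using h by (simp add: field_simps)
    ultimately show "l1_norm_le (\<lambda>x. P (s + h) x y - P s x y - h * mat_mult (R s) (P s) x y) (h * e)"
      using h by simp
  qed
  then show ?thesis using d(1) by blast
qed

lemma P_col_deriv:
  assumes "s \<in> {0..\<tau>} - K"
  shows "has_right_deriv_l1 \<tau> (\<lambda>s x. P s x y) (mat_vec (R s) (\<lambda>z. P s z y)) s"
  unfolding has_right_deriv_l1_def
proof (intro allI impI)
  fix e :: real assume "e > 0"
  from P_mat_deriv[OF assms this] obtain d where d: "d > 0" "\<forall>h. 0 < h \<and> h < d \<and> s + h \<le> \<tau> \<longrightarrow>
      op_norm_le (\<lambda>x z. P (s + h) x z - P s x z - h * mat_mult (R s) (P s) x z) (h * e)"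
    by blast
  have "l1_norm_le (\<lambda>x. P (s + h) x y - P s x y - h * mat_vec (R s) (\<lambda>z. P s z y) x) (h * e)"
    if "0 < h \<and> h < d \<and> s + h \<le> \<tau>" for h
    using op_norm_leD[OF d(2)[rule_format, OF that], of y] by (simp add: mat_mult_eq_mat_vec)
  then show "\<exists>d>0. \<forall>h. 0 < h \<and> h < d \<and> s + h \<le> \<tau> \<longrightarrow>
      l1_norm_le (\<lambda>x. P (s + h) x y - P s x y - h * mat_vec (R s) (\<lambda>z. P s z y) x) (h * e)"
    using d(1) by blast
qed

lemma P_col_continuous: "continuous_on_l1 {0..\<tau>} (\<lambda>s x. P s x y)"
  unfolding continuous_on_l1_def
proof (intro ballI allI impI)
  fix s e :: real assume s: "s \<in> {0..\<tau>}" and e: "e > 0"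
  obtain d where d: "d > 0" "\<forall>s'\<in>{0..\<tau>}. \<bar>s' - s\<bar> < d \<longrightarrow> mat_close (P s') (P s) e"
    using P_continuous[unfolded mat_continuous_on_def, rule_format, OF s e] by blast
  have "l1_norm_le (\<lambda>x. P s' x y - P s x y) e" if "s' \<in> {0..\<tau>}" "\<bar>s' - s\<bar> < d" for s'
    using op_norm_leD[OF d(2)[rule_format, OF that, unfolded mat_close_iff_op_norm_le]] .
  then show "\<exists>d>0. \<forall>s'\<in>{0..\<tau>}. \<bar>s' - s\<bar> < d \<longrightarrow> l1_norm_le (\<lambda>x. P s' x y - P s x y) e"
    using d(1) by blast
qed

lemma P_col_summable:
  assumes s: "s \<in> {0..\<tau>}"
  shows "(\<lambda>x. \<bar>P s x y\<bar>) summable_on UNIV"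
proof -
  define good where "good t \<longleftrightarrow> (\<lambda>x. P t x y) summable_on UNIV" for t
  have "good constant_on {0..\<tau>}"
  proof (rule locally_constant_imp_constant)
    fix t assume t: "t \<in> {0..\<tau>}"
    obtain d where d: "d > 0" "\<forall>t'\<in>{0..\<tau>}. \<bar>t' - t\<bar> < d \<longrightarrow> l1_norm_le (\<lambda>x. P t' x y - P t x y) 1"
      using P_col_continuous t unfolding continuous_on_l1_def by (meson zero_less_one)
    have "good t' = good t" if "t' \<in> {0..\<tau>} \<inter> ball t d" for t'
    proof -
      have "(\<lambda>x. P t' x y - P t x y) summable_on UNIV"
        using d that by (intro l1_norm_le_summable[of _ 1]) (auto simp: dist_real_def abs_minus_commute)
      from summable_on_add[OF this, of "\<lambda>x. P t x y"] summable_on_diff[OF _ this, of "\<lambda>x. P t' x y"]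
      show ?thesis by (auto simp: good_def)
    qed
    moreover have "openin (top_of_set {0..\<tau>}) ({0..\<tau>} \<inter> ball t d)" by (rule openin_open_Int) simp
    moreover have "t \<in> {0..\<tau>} \<inter> ball t d" using t d(1) by simp
    ultimately show "\<exists>T. openin (top_of_set {0..\<tau>}) T \<and> t \<in> T \<and> (\<forall>t'\<in>T. good t' = good t)"
      by blast
  qed (rule connected_Icc)
  moreover have "good 0"
    using l1_norm_le_summable[OF op_norm_leD[OF op_norm_le_id]] by (simp add: good_def P_0)
  ultimately have "good s" using s tau_nonneg unfolding constant_on_def by (metis atLeastAtMost_iff order_refl)
  then show ?thesis by (simp add: good_def abs_summable_on_iff_real)
qed

lemma P_weighted_bound:
  assumes t: "t \<in> {0..\<tau>}" and L: "0 \<le> L"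
  shows "(\<lambda>x. weight L x y * \<bar>P t x y\<bar>) summable_on UNIV"
    and "wnorm (\<lambda>x. weight L x y) (\<lambda>x. P t x y) \<le> exp (\<rho> * t)"
proof -
  have sub: "{0..t} \<subseteq> {0..\<tau>}" using t by auto
  have w: "\<And>x. 0 \<le> weight L x y" "\<And>x. weight L x y \<le> exp (\<mu> * L)"
    using weight_le_exp_L by (simp_all add: weight_def)
  show "(\<lambda>x. weight L x y * \<bar>P t x y\<bar>) summable_on UNIV"
    by (rule wnorm_summable[OF w P_col_summable[OF t]])
  have "wnorm (\<lambda>x. weight L x y) (\<lambda>x. P t x y - 0) + wnorm (\<lambda>x. weight L x y) (\<lambda>x. 0)
      \<le> (wnorm (\<lambda>x. weight L x y) (\<lambda>x. P 0 x y - 0) + wnorm (\<lambda>x. weight L x y) (\<lambda>x. 0)) * exp (\<rho> * (t - 0))"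
  proof (rule weighted_gronwall[where v="\<lambda>s x. P s x y" and c="\<lambda>x. 0" and R=R and a=0 and b=t,
        OF _ finite_K \<rho>_nonneg w])
    show "0 \<le> t" using t by simp
    show "continuous_on_l1 {0..t} (\<lambda>s x. P s x y)"
      using P_col_continuous sub unfolding continuous_on_l1_def by blast
    show "has_right_deriv_l1 t (\<lambda>s x. P s x y) (mat_vec (R s) (\<lambda>z. P s z y)) s" if "s \<in> {0..<t} - K" for s
    proof -
      have "s \<in> {0..\<tau>} - K" using that t by auto
      then show ?thesis using P_col_deriv[of s y] t unfolding has_right_deriv_l1_def by fastforce
    qed
    show "(\<lambda>x. \<bar>P s x y\<bar>) summable_on UNIV" if "s \<in> {0..t}" for s
      using P_col_summable sub that by blast
    show "(\<lambda>x. weight L x y * \<bar>mat_vec (R s) u x\<bar>) summable_on UNIV \<and>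
        wnorm (\<lambda>x. weight L x y) (mat_vec (R s) u) \<le> \<rho> * wnorm (\<lambda>x. weight L x y) u"
      if "s \<in> {0..t}" "(\<lambda>x. weight L x y * \<bar>u x\<bar>) summable_on UNIV" for s u
      using R_weighted_mat_vec[OF _ L that(2)] sub that(1) by blast
  qed simp
  moreover have "wnorm (\<lambda>x. weight L x y) (\<lambda>x. P 0 x y) = 1"
  proof -
    have "(\<lambda>x. weight L x y * \<bar>P 0 x y\<bar>) = (\<lambda>x. if x = y then 1 else 0)"
      by (auto simp: P_0 id_mat_def weight_self[OF L])
    then show ?thesis using infsumI[OF has_sum_single] by (simp add: wnorm_def)
  qed
  ultimately show "wnorm (\<lambda>x. weight L x y) (\<lambda>x. P t x y) \<le> exp (\<rho> * t)"
    by (simp add: wnorm_def)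
qed

lemma op_norm_le_P:
  assumes t: "t \<in> {0..\<tau>}"
  shows "op_norm_le (P t) (exp (\<rho> * \<tau>))"
proof (rule op_norm_leI)
  fix y
  have "(\<Sum>\<^sub>\<infinity>x. \<bar>P t x y\<bar>) \<le> exp (\<rho> * t)"
    using P_weighted_bound(2)[OF t order_refl, of y] by (simp add: wnorm_def weight_0)
  also have "\<dots> \<le> exp (\<rho> * \<tau>)" using t \<rho>_nonneg by (auto intro: mult_left_mono)
  finally show "l1_norm_le (\<lambda>x. P t x y) (exp (\<rho> * \<tau>))"
    using P_col_summable[OF t] by (simp add: l1_norm_le_def)
qed

lemma P_exp_decay:
  assumes t: "t \<in> {0..\<tau>}"
  shows "\<bar>P t x y\<bar> \<le> exp (\<rho> * \<tau>) * exp (- \<mu> * real_of_int \<bar>fst x - fst y\<bar>)"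
proof -
  define L where "L = real_of_int \<bar>fst x - fst y\<bar>"
  have L: "0 \<le> L" by (simp add: L_def)
  have "weight L x y * \<bar>P t x y\<bar> \<le> wnorm (\<lambda>x. weight L x y) (\<lambda>x. P t x y)"
    unfolding wnorm_def by (rule le_infsum_nonneg[OF P_weighted_bound(1)[OF t L]]) (simp add: weight_def)
  also have "\<dots> \<le> exp (\<rho> * t)" by (rule P_weighted_bound(2)[OF t L])
  also have "\<dots> \<le> exp (\<rho> * \<tau>)" using t \<rho>_nonneg by (auto intro: mult_left_mono)
  finally have "exp (\<mu> * L) * \<bar>P t x y\<bar> \<le> exp (\<rho> * \<tau>)" by (simp add: weight_def L_def)
  then show ?thesis
    by (simp add: L_def exp_minus field_simps)
qed

lemma R_col_sum: "t \<in> {0..\<tau>} \<Longrightarrow> (\<Sum>\<^sub>\<infinity>x. R t x z) = 0"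
  using R_rate unfolding rate_mat_def by (blast intro: infsumI)

lemma R_off_diag_nonneg: "t \<in> {0..\<tau>} \<Longrightarrow> z \<noteq> x \<Longrightarrow> 0 \<le> R t x z"
  using R_rate unfolding rate_mat_def by (metis (mono_tags))

lemma infsum_mat_vec_R:
  assumes "t \<in> {0..\<tau>}" "l1_norm_le u b"
  shows "(\<Sum>\<^sub>\<infinity>x. mat_vec (R t) u x) = 0"
  using infsum_mat_vec[OF op_norm_le_R assms(2)] assms(1) by (simp add: R_col_sum)

lemma P_col_l1: "t \<in> {0..\<tau>} \<Longrightarrow> l1_norm_le (\<lambda>x. P t x y) (exp (\<rho> * \<tau>))"
  by (rule op_norm_leD[OF op_norm_le_P])

lemma P_col_sum:
  assumes t: "t \<in> {0..\<tau>}"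
  shows "(\<Sum>\<^sub>\<infinity>x. P t x y) = 1"
proof -
  define \<sigma> where "\<sigma> s = (\<Sum>\<^sub>\<infinity>x. P s x y)" for s
  have sub: "{0..t} \<subseteq> {0..\<tau>}" using t by auto
  have "continuous_on {0..\<tau>} \<sigma>"
    unfolding \<sigma>_def
    by (rule continuous_on_infsum_lipschitz[where \<phi>="\<lambda>x a. a" and L=1, OF _ _ P_col_continuous])
       (auto intro: l1_norm_le_summable[OF P_col_l1])
  have increment: "\<exists>d>0. \<forall>h. 0 < h \<and> h < d \<and> s + h \<le> t \<longrightarrow> \<bar>\<sigma> (s + h) - \<sigma> s\<bar> \<le> h * e"
    if s: "s \<in> {0..<t} - K" and e: "e > 0" for s e
  proof -
    have s': "s \<in> {0..\<tau>} - K" "s \<in> {0..\<tau>}" using s t by auto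
    from P_col_deriv[OF s'(1), of y, unfolded has_right_deriv_l1_def, rule_format, OF e]
    obtain d where d: "d > 0" "\<forall>h. 0 < h \<and> h < d \<and> s + h \<le> \<tau> \<longrightarrow>
        l1_norm_le (\<lambda>x. P (s + h) x y - P s x y - h * mat_vec (R s) (\<lambda>z. P s z y) x) (h * e)"
      by blast
    have "\<bar>\<sigma> (s + h) - \<sigma> s\<bar> \<le> h * e" if h: "0 < h" "h < d" "s + h \<le> t" for h
    proof -
      define Rv where "Rv = mat_vec (R s) (\<lambda>z. P s z y)"
      define err where "err x = P (s + h) x y - P s x y - h * Rv x" for x
      have err: "l1_norm_le err (h * e)" using d(2) h t by (simp add: err_def[abs_def] Rv_def)
      have Rv: "l1_norm_le Rv (\<rho> * exp (\<rho> * \<tau>))"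
        unfolding Rv_def by (rule mat_vec_bound(2)[OF op_norm_le_R[OF s'(2)] P_col_l1[OF s'(2)]])
      have sh: "s + h \<in> {0..\<tau>}" using h s t by auto
      have "\<sigma> (s + h) - \<sigma> s = (\<Sum>\<^sub>\<infinity>x. h * Rv x + err x)"
        unfolding \<sigma>_def err_def
        by (simp add: infsum_diff[OF l1_norm_le_summable[OF P_col_l1[OF sh]] l1_norm_le_summable[OF P_col_l1[OF s'(2)]], symmetric])
      also have "\<dots> = h * (\<Sum>\<^sub>\<infinity>x. Rv x) + (\<Sum>\<^sub>\<infinity>x. err x)"
        using infsum_add[OF summable_on_cmult_right[OF l1_norm_le_summable[OF Rv]] l1_norm_le_summable[OF err]]
        by (simp add: infsum_cmult_right')
      also have "(\<Sum>\<^sub>\<infinity>x. Rv x) = 0" unfolding Rv_def by (rule infsum_mat_vec_R[OF s'(2) P_col_l1[OF s'(2)]])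
      finally have "\<bar>\<sigma> (s + h) - \<sigma> s\<bar> = \<bar>\<Sum>\<^sub>\<infinity>x. err x\<bar>" by simp
      also have "\<dots> \<le> h * e"
        using abs_infsum_le_infsum_abs[of err UNIV] err by (simp add: l1_norm_le_def)
      finally show ?thesis .
    qed
    then show ?thesis using d(1) by blast
  qed
  have "(\<lambda>x. P 0 x y) = (\<lambda>x. if x = y then 1 else 0)" by (simp add: P_0 id_mat_def)
  then have "\<sigma> 0 = 1" using infsumI[OF has_sum_single[of y "1::real"]] by (simp add: \<sigma>_def)
  moreover have "\<sigma> t = \<sigma> 0"
    using t continuous_on_subset[OF \<open>continuous_on {0..\<tau>} \<sigma>\<close> sub]
    by (intro eq_if_right_deriv_zero_except[OF _ _ finite_K increment]) auto
  ultimately show ?thesis by (simp add: \<sigma>_def)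
qed

lemma neg_part_col_step:
  assumes s: "s \<in> {0..\<tau>}" and sh: "s + h \<in> {0..\<tau>}" and h: "0 < h" "h * C \<le> 1"
  shows "(\<Sum>\<^sub>\<infinity>x. max 0 (- P (s + h) x y))
    \<le> (\<Sum>\<^sub>\<infinity>x. max 0 (- P s x y)) + (\<Sum>\<^sub>\<infinity>x. \<bar>P (s + h) x y - P s x y - h * mat_vec (R s) (\<lambda>z. P s z y) x\<bar>)"
proof -
  define v where "v x = P s x y" for x
  define n where "n x = max 0 (- v x)" for x
  define err where "err x = P (s + h) x y - v x - h * mat_vec (R s) v x" for x
  have v: "l1_norm_le v (exp (\<rho> * \<tau>))" unfolding v_def by (rule P_col_l1[OF s])
  have n: "l1_norm_le n (exp (\<rho> * \<tau>))" unfolding n_def by (rule l1_norm_le_comparison[OF v]) simp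
  have Rn: "l1_norm_le (mat_vec (R s) n) (\<rho> * exp (\<rho> * \<tau>))"
    by (rule mat_vec_bound(2)[OF op_norm_le_R[OF s] n])
  have err: "l1_norm_le err (exp (\<rho> * \<tau>) + exp (\<rho> * \<tau>) + \<bar>h\<bar> * (\<rho> * exp (\<rho> * \<tau>)))"
    unfolding err_def v_def
    by (intro l1_norm_le_diff l1_norm_le_scale P_col_l1 s sh mat_vec_bound(2)[OF op_norm_le_R[OF s]])
  have pointwise: "max 0 (- P (s + h) x y) \<le> n x + h * mat_vec (R s) n x + \<bar>err x\<bar>" for x
  proof -
    have "h * \<bar>R s x x\<bar> \<le> h * C" using R_exp_decay[OF s, of x x] h by (intro mult_left_mono) auto
    then have "h * \<bar>R s x x\<bar> \<le> 1" using h(2) by linarith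
    from neg_part_euler_step[OF op_norm_le_R[OF s] v R_off_diag_nonneg[OF s] less_imp_le[OF h(1)] this]
    have "max 0 (- (v x + h * mat_vec (R s) v x)) \<le> n x + h * mat_vec (R s) n x"
      by (simp add: n_def[abs_def])
    moreover have "max 0 (- P (s + h) x y) \<le> max 0 (- (v x + h * mat_vec (R s) v x)) + \<bar>err x\<bar>"
      by (auto simp: err_def max_def abs_if split: if_splits)
    ultimately show ?thesis by linarith
  qed
  have summable: "n summable_on UNIV" "(\<lambda>x. h * mat_vec (R s) n x) summable_on UNIV"
      "(\<lambda>x. \<bar>err x\<bar>) summable_on UNIV"
    using l1_norm_le_summable[OF n] summable_on_cmult_right[OF l1_norm_le_summable[OF Rn]] err
    by (simp_all add: l1_norm_le_def)
  have "(\<Sum>\<^sub>\<infinity>x. max 0 (- P (s + h) x y)) \<le> (\<Sum>\<^sub>\<infinity>x. n x + h * mat_vec (R s) n x + \<bar>err x\<bar>)"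
  proof (rule infsum_mono[OF _ _ pointwise])
    show "(\<lambda>x. max 0 (- P (s + h) x y)) summable_on UNIV"
      by (rule summable_on_real_comparison[OF P_col_summable[OF sh, of y]]) auto
  qed (intro summable_on_add summable)
  also have "\<dots> = (\<Sum>\<^sub>\<infinity>x. n x) + (\<Sum>\<^sub>\<infinity>x. h * mat_vec (R s) n x) + (\<Sum>\<^sub>\<infinity>x. \<bar>err x\<bar>)"
    using infsum_add[OF summable_on_add[OF summable(1,2)] summable(3)] infsum_add[OF summable(1,2)]
    by simp
  also have "(\<Sum>\<^sub>\<infinity>x. h * mat_vec (R s) n x) = 0"
    using infsum_mat_vec_R[OF s n] by (simp add: infsum_cmult_right')
  finally show ?thesis by (simp add: n_def err_def v_def[abs_def])
qed

lemma P_nonneg: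
  assumes t: "t \<in> {0..\<tau>}"
  shows "0 \<le> P t x y"
proof -
  define N where "N s = (\<Sum>\<^sub>\<infinity>x. max 0 (- P s x y))" for s
  have sub: "{0..t} \<subseteq> {0..\<tau>}" using t by auto
  have summable: "(\<lambda>x. max 0 (- P s x y)) summable_on UNIV" if "s \<in> {0..\<tau>}" for s
    by (rule summable_on_real_comparison[OF P_col_summable[OF that, of y]]) auto
  have "continuous_on {0..\<tau>} N"
    unfolding N_def
    by (rule continuous_on_infsum_lipschitz[where \<phi>="\<lambda>x a. max 0 (- a)" and L=1, OF summable _ P_col_continuous])
       (auto simp: max_def)
  have "upper_right_deriv_le t N s 0" if s: "s \<in> {0..<t} - K" for s
    unfolding upper_right_deriv_le_def
  proof (intro allI impI)
    fix e :: real assume e: "e > 0"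
    have s': "s \<in> {0..\<tau>} - K" "s \<in> {0..\<tau>}" using s t by auto
    from P_col_deriv[OF s'(1), of y, unfolded has_right_deriv_l1_def, rule_format, OF e]
    obtain d where d: "d > 0" "\<forall>h. 0 < h \<and> h < d \<and> s + h \<le> \<tau> \<longrightarrow>
        l1_norm_le (\<lambda>x. P (s + h) x y - P s x y - h * mat_vec (R s) (\<lambda>z. P s z y) x) (h * e)"
      by blast
    have "N (s + h) \<le> N s + h * (0 + e)" if h: "0 < h" "h < min d (1 / C)" "s + h \<le> t" for h
    proof -
      have "h * C \<le> 1" using h C_pos by (simp add: field_simps)
      moreover have "s + h \<in> {0..\<tau>}" using h s t by auto
      ultimately have "N (s + h) \<le> N s
          + (\<Sum>\<^sub>\<infinity>x. \<bar>P (s + h) x y - P s x y - h * mat_vec (R s) (\<lambda>z. P s z y) x\<bar>)"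
        unfolding N_def using neg_part_col_step[OF s'(2) _ h(1)] by blast
      moreover have "l1_norm_le (\<lambda>x. P (s + h) x y - P s x y - h * mat_vec (R s) (\<lambda>z. P s z y) x) (h * e)"
        using h t by (intro d(2)[rule_format]) auto
      ultimately show ?thesis by (simp add: l1_norm_le_def)
    qed
    moreover have "min d (1 / C) > 0" using d(1) C_pos by simp
    ultimately show "\<exists>d>0. \<forall>h. 0 < h \<and> h < d \<and> s + h \<le> t \<longrightarrow> N (s + h) \<le> N s + h * (0 + e)"
      by blast
  qed
  then have "N t \<le> N 0"
    using t continuous_on_subset[OF \<open>continuous_on {0..\<tau>} N\<close> sub]
    by (intro le_if_upper_right_deriv_nonpos_except[where f=N and a=0 and b=t, OF finite_K]) auto
  moreover have "(\<lambda>x. max 0 (- P 0 x y)) = (\<lambda>x. 0)" by (auto simp: P_0 id_mat_def)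
  then have "N 0 = 0" by (simp add: N_def)
  ultimately have "max 0 (- P t x y) = 0"
    using nonneg_infsum_le_0D[of "\<lambda>x. max 0 (- P t x y)" UNIV x] summable[OF t] by (simp add: N_def)
  then show ?thesis by simp
qed

lemma P_stochastic:
  assumes t: "t \<in> {0..\<tau>}"
  shows "stochastic (P t)"
  unfolding stochastic_def
proof (intro conjI allI)
  show "0 \<le> P t x y" for x y by (rule P_nonneg[OF t])
  show "((\<lambda>x. P t x y) has_sum 1) UNIV" for y
    using l1_norm_le_summable[OF P_col_l1[OF t]] P_col_sum[OF t] by (simp add: has_sum_iff)
qed

lemma P_local: "t \<in> {0..\<tau>} \<Longrightarrow> local_mat (P t)"
  by (rule local_matI[OF \<mu>_pos P_exp_decay])

lemma P_vec_continuous: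
  assumes u: "l1_norm_le u m"
  shows "continuous_on_l1 {0..\<tau>} (\<lambda>s. mat_vec (P s) u)"
  unfolding continuous_on_l1_def
proof (intro ballI allI impI)
  fix s e :: real assume s: "s \<in> {0..\<tau>}" and e: "e > 0"
  have m: "0 \<le> m" by (rule l1_norm_le_nonneg[OF u])
  then have "e / (m + 1) > 0" using e by simp
  then obtain d where d: "d > 0" "\<forall>s'\<in>{0..\<tau>}. \<bar>s' - s\<bar> < d \<longrightarrow> mat_close (P s') (P s) (e / (m + 1))"
    using P_continuous[unfolded mat_continuous_on_def, rule_format, OF s] by blast
  have "l1_norm_le (\<lambda>x. mat_vec (P s') u x - mat_vec (P s) u x) e"
    if s': "s' \<in> {0..\<tau>}" "\<bar>s' - s\<bar> < d" for s'
  proof (rule l1_norm_le_mono)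
    show "l1_norm_le (\<lambda>x. mat_vec (P s') u x - mat_vec (P s) u x) (e / (m + 1) * m)"
      by (rule mat_close_mat_vec[OF d(2)[rule_format, OF s'] op_norm_le_P[OF s'(1)] op_norm_le_P[OF s] u])
    show "e / (m + 1) * m \<le> e" using m e by (simp add: field_simps)
  qed
  then show "\<exists>d>0. \<forall>s'\<in>{0..\<tau>}. \<bar>s' - s\<bar> < d \<longrightarrow>
      l1_norm_le (\<lambda>x. mat_vec (P s') u x - mat_vec (P s) u x) e"
    using d(1) by blast
qed

lemma P_vec_deriv:
  assumes s: "s \<in> {0..\<tau>} - K" and u: "l1_norm_le u m"
  shows "has_right_deriv_l1 \<tau> (\<lambda>s. mat_vec (P s) u) (mat_vec (R s) (mat_vec (P s) u)) s"
  unfolding has_right_deriv_l1_def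
proof (intro allI impI)
  fix e :: real assume e: "e > 0"
  have s': "s \<in> {0..\<tau>}" using s by simp
  have m: "0 \<le> m" by (rule l1_norm_le_nonneg[OF u])
  then have "e / (m + 1) > 0" using e by simp
  from P_mat_deriv[OF s this] obtain d where d: "d > 0" "\<forall>h. 0 < h \<and> h < d \<and> s + h \<le> \<tau> \<longrightarrow>
      op_norm_le (\<lambda>x z. P (s + h) x z - P s x z - h * mat_mult (R s) (P s) x z) (h * (e / (m + 1)))"
    by blast
  have RP: "op_norm_le (mat_mult (R s) (P s)) (\<rho> * exp (\<rho> * \<tau>))"
    by (rule op_norm_le_mat_mult[OF op_norm_le_R[OF s'] op_norm_le_P[OF s']])
  have "l1_norm_le (\<lambda>x. mat_vec (P (s + h)) u x - mat_vec (P s) u x - h * mat_vec (R s) (mat_vec (P s) u) x)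
      (h * e)" if h: "0 < h" "h < d" "s + h \<le> \<tau>" for h
  proof -
    have sh: "s + h \<in> {0..\<tau>}" using h s' by auto
    have eq: "mat_vec (\<lambda>x z. P (s + h) x z - P s x z - h * mat_mult (R s) (P s) x z) u
        = (\<lambda>x. mat_vec (P (s + h)) u x - mat_vec (P s) u x - h * mat_vec (R s) (mat_vec (P s) u) x)"
      by (rule ext) (simp add: mat_vec_diff_scale_left[OF op_norm_le_P[OF sh] op_norm_le_P[OF s'] RP u]
          mat_vec_mat_vec[OF op_norm_le_R[OF s'] op_norm_le_P[OF s'] u])
    have "l1_norm_le (mat_vec (\<lambda>x z. P (s + h) x z - P s x z - h * mat_mult (R s) (P s) x z) u)
        (h * (e / (m + 1)) * m)"
      using d(2) h by (intro mat_vec_bound(2)[OF _ u]) auto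
    then show ?thesis unfolding eq
      by (rule l1_norm_le_mono) (use h m e in \<open>simp add: field_simps mult_left_mono\<close>)
  qed
  then show "\<exists>d>0. \<forall>h. 0 < h \<and> h < d \<and> s + h \<le> \<tau> \<longrightarrow>
      l1_norm_le (\<lambda>x. mat_vec (P (s + h)) u x - mat_vec (P s) u x - h * mat_vec (R s) (mat_vec (P s) u) x)
        (h * e)"
    using d(1) by blast
qed

text \<open>The columns of P(s) S solve the master equation and equal unit vectors at time s0, so
  the Gronwall estimate bounds their distance from the unit vectors by exp(\<rho>(t - s0)) - 1.\<close>
lemma P_mult_inverse_near_id:
  assumes s0: "s0 \<in> {0..\<tau>}" and S: "op_norm_le S M" "mat_mult (P s0) S = id_mat"
    and t: "t \<in> {s0..\<tau>}" and close: "exp (\<rho> * (t - s0)) \<le> 3 / 2"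
  shows "op_norm_le (\<lambda>x y. id_mat x y - mat_mult (P t) S x y) (1 / 2)"
proof (rule op_norm_leI)
  fix y
  define v where "v s = mat_vec (P s) (\<lambda>z. S z y)" for s
  define c where "c x = (if x = y then 1 else 0 :: real)" for x
  have col: "l1_norm_le (\<lambda>z. S z y) M" by (rule op_norm_leD[OF S(1)])
  have sub: "{s0..t} \<subseteq> {0..\<tau>}" using s0 t by auto
  have c: "l1_norm_le c 1" unfolding c_def by (rule l1_norm_le_single)
  have v: "l1_norm_le (v s) (exp (\<rho> * \<tau>) * M)" if "s \<in> {0..\<tau>}" for s
    unfolding v_def by (rule mat_vec_bound(2)[OF op_norm_le_P[OF that] col])
  have "wnorm (\<lambda>_. 1) (\<lambda>x. v t x - c x) + wnorm (\<lambda>_. 1) c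
      \<le> (wnorm (\<lambda>_. 1) (\<lambda>x. v s0 x - c x) + wnorm (\<lambda>_. 1) c) * exp (\<rho> * (t - s0))"
  proof (rule weighted_gronwall[where v=v and c=c and R=R and a=s0 and b=t and w="\<lambda>_. 1" and W=1,
        OF _ finite_K \<rho>_nonneg])
    show "s0 \<le> t" using t by simp
    show "(\<lambda>x. \<bar>v s x\<bar>) summable_on UNIV" if "s \<in> {s0..t}" for s
      using v[of s] sub that by (auto simp: l1_norm_le_def)
    show "(\<lambda>x. \<bar>c x\<bar>) summable_on UNIV" using c by (simp add: l1_norm_le_def)
    show "continuous_on_l1 {s0..t} v"
      using P_vec_continuous[OF col] sub unfolding continuous_on_l1_def v_def by blast
    show "has_right_deriv_l1 t v (mat_vec (R s) (v s)) s" if "s \<in> {s0..<t} - K" for s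
    proof -
      have "s \<in> {0..\<tau>} - K" using that sub by auto
      then show ?thesis
        using P_vec_deriv[OF _ col] t unfolding has_right_deriv_l1_def v_def by fastforce
    qed
    show "(\<lambda>x. 1 * \<bar>mat_vec (R s) u x\<bar>) summable_on UNIV \<and>
        wnorm (\<lambda>_. 1) (mat_vec (R s) u) \<le> \<rho> * wnorm (\<lambda>_. 1) u"
      if "s \<in> {s0..t}" "(\<lambda>x. 1 * \<bar>u x\<bar>) summable_on UNIV" for s u
      using R_weighted_mat_vec[of s 0 y u] that sub by (auto simp: weight_0)
  qed auto
  moreover have "v s0 = c"
    using S(2) by (auto simp: v_def c_def id_mat_def mat_mult_eq_mat_vec[symmetric])
  moreover have "wnorm (\<lambda>_. 1) c = 1"
    using infsumI[OF has_sum_single[of y "1::real"]] by (simp add: wnorm_def c_def if_distrib cong: if_cong)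
  ultimately have "(\<Sum>\<^sub>\<infinity>x. \<bar>v t x - c x\<bar>) \<le> 1 / 2"
    using close by (simp add: wnorm_def)
  moreover have "(\<lambda>x. \<bar>v t x - c x\<bar>) summable_on UNIV"
    using l1_norm_le_diff[OF v c] s0 t by (auto simp: l1_norm_le_def)
  moreover have "\<bar>id_mat x y - mat_mult (P t) S x y\<bar> = \<bar>v t x - c x\<bar>" for x
    by (simp add: v_def c_def id_mat_def mat_mult_eq_mat_vec abs_minus_commute)
  ultimately show "l1_norm_le (\<lambda>x. id_mat x y - mat_mult (P t) S x y) (1 / 2)"
    by (simp add: l1_norm_le_def)
qed

lemma P_invertible_step:
  assumes s0: "s0 \<in> {0..\<tau>}" and S: "op_norm_le S M" "mat_mult S (P s0) = id_mat" "mat_mult (P s0) S = id_mat"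
    and t: "t \<in> {s0..\<tau>}" and close: "exp (\<rho> * (t - s0)) \<le> 3 / 2"
  shows "invertible_l1 (P t)"
proof -
  define E where "E = mat_mult (P t) S"
  have t0: "t \<in> {0..\<tau>}" using s0 t by auto
  have "invertible_l1 E"
    using invertible_near_id[OF P_mult_inverse_near_id[OF s0 S(1) S(3) t close]]
    unfolding invertible_l1_iff E_def by blast
  moreover have "invertible_l1 (P s0)" unfolding invertible_l1_iff using S by blast
  ultimately have "invertible_l1 (mat_mult E (P s0))"
    using invertible_l1_mat_mult[OF op_norm_le_mat_mult[OF op_norm_le_P[OF t0] S(1)] op_norm_le_P[OF s0]]
    unfolding E_def by blast
  moreover have "mat_mult E (P s0) = P t"
    using mat_mult_assoc[OF op_norm_le_P[OF t0] S(1) op_norm_le_P[OF s0]] S(2)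
    by (simp add: E_def mat_mult_id_right)
  ultimately show ?thesis by simp
qed

lemma P_invertible:
  assumes t: "t \<in> {0..\<tau>}"
  shows "invertible_l1 (P t)"
proof -
  define \<delta> where "\<delta> = ln (3 / 2) / (\<rho> + 1)"
  have \<delta>: "\<delta> > 0" using \<rho>_nonneg by (simp add: \<delta>_def)
  have short_step: "exp (\<rho> * (b - a)) \<le> 3 / 2" if "0 \<le> b - a" "b - a \<le> \<delta>" for a b
  proof -
    have "\<rho> * (b - a) \<le> \<rho> * \<delta>" using that \<rho>_nonneg by (intro mult_left_mono) auto
    also have "\<dots> = ln (3 / 2) * (\<rho> / (\<rho> + 1))" by (simp add: \<delta>_def)
    also have "\<dots> \<le> ln (3 / 2)" by (rule mult_left_le) (use \<rho>_nonneg in auto)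
    finally show ?thesis using exp_le_cancel_iff[of "\<rho> * (b - a)" "ln (3 / 2)"] by simp
  qed
  have "\<forall>t\<in>{0..\<tau>}. t \<le> real n * \<delta> \<longrightarrow> invertible_l1 (P t)" for n
  proof (induction n)
    case 0
    have "invertible_l1 (P 0)"
      unfolding invertible_l1_iff P_0 using op_norm_le_id mat_mult_id_left by blast
    then show ?case by auto
  next
    case (Suc n)
    show ?case
    proof (intro ballI impI)
      fix t assume t: "t \<in> {0..\<tau>}" and t_le: "t \<le> real (Suc n) * \<delta>"
      show "invertible_l1 (P t)"
      proof (cases "t \<le> real n * \<delta>")
        case True
        then show ?thesis using Suc t by blast
      next
        case False
        define s0 where "s0 = real n * \<delta>"
        have s0: "s0 \<in> {0..\<tau>}" using False t \<delta> by (auto simp: s0_def)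
        then obtain S M where S: "op_norm_le S M" "mat_mult S (P s0) = id_mat" "mat_mult (P s0) S = id_mat"
          using Suc unfolding invertible_l1_iff s0_def by blast
        show ?thesis
        proof (rule P_invertible_step[OF s0 S])
          show "t \<in> {s0..\<tau>}" using False t by (auto simp: s0_def)
          show "exp (\<rho> * (t - s0)) \<le> 3 / 2"
            by (rule short_step) (use False t_le in \<open>auto simp: s0_def algebra_simps\<close>)
        qed
      qed
    qed
  qed
  moreover obtain n :: nat where "t / \<delta> \<le> real n" using real_arch_simple by blast
  then have "t \<le> real n * \<delta>" using \<delta> by (simp add: field_simps)
  ultimately show ?thesis using t by blast
qed

lemma lis_mat_P: "t \<in> {0..\<tau>} \<Longrightarrow> lis_mat (P t)"
  by (simp add: lis_mat_def P_local P_invertible P_stochastic)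

end

section \<open>Homotopies generated by master equations\<close>

lemma master_equation_solutionI:
  fixes R P :: "real \<Rightarrow> ('d::finite) smat"
  assumes "0 \<le> \<tau>" "local_rate_family \<tau> R" "texp_solution \<tau> R P"
  obtains C l K where "master_equation_solution \<tau> C l K R P"
proof -
  obtain C l where "0 < C" "0 < l"
    "\<forall>t\<in>{0..\<tau>}. \<forall>i a j b. \<bar>R t (i, a) (j, b)\<bar> \<le> C * exp (- real_of_int \<bar>i - j\<bar> / l)"
    using assms(2) unfolding local_rate_family_def by blast
  moreover obtain K where "finite K" "\<forall>s\<in>{0..\<tau>} - K. \<forall>e>0. \<exists>d>0. \<forall>h. h \<noteq> 0 \<and> \<bar>h\<bar> < d \<and> s + h \<in> {0..\<tau>} \<longrightarrow>
      mat_close (\<lambda>x y. (P (s + h) x y - P s x y) / h) (mat_mult (R s) (P s)) e"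
    using assms(3) unfolding texp_solution_def by blast
  ultimately have "master_equation_solution \<tau> C l K R P"
    using assms unfolding master_equation_solution_def local_rate_family_def texp_solution_def by blast
  then show thesis by (rule that)
qed

lemma mat_continuous_on_compose:
  assumes G: "mat_continuous_on S G" and \<phi>: "continuous_on U \<phi>" "\<phi> ` U \<subseteq> S"
  shows "mat_continuous_on U (\<lambda>u. G (\<phi> u))"
  unfolding mat_continuous_on_def
proof (intro ballI allI impI)
  fix u e :: real assume u: "u \<in> U" and e: "e > 0"
  obtain d where d: "d > 0" "\<forall>t'\<in>S. \<bar>t' - \<phi> u\<bar> < d \<longrightarrow> mat_close (G t') (G (\<phi> u)) e"
    using G[unfolded mat_continuous_on_def, rule_format, of "\<phi> u" e] \<phi>(2) u e by blast
  obtain d' where d': "d' > 0" "\<forall>u'\<in>U. dist u' u < d' \<longrightarrow> dist (\<phi> u') (\<phi> u) < d"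
    using \<phi>(1)[unfolded continuous_on_iff, rule_format, OF u d(1)] by blast
  show "\<exists>d>0. \<forall>u'\<in>U. \<bar>u' - u\<bar> < d \<longrightarrow> mat_close (G (\<phi> u')) (G (\<phi> u)) e"
    using d d' \<phi>(2) by (intro exI[of _ d']) (auto simp: dist_real_def)
qed

lemma mat_continuous_on_mult_right:
  assumes F: "mat_continuous_on S F" "\<And>s. s \<in> S \<Longrightarrow> op_norm_le (F s) M" and T: "op_norm_le T c"
  shows "mat_continuous_on S (\<lambda>s. mat_mult (F s) T)"
  unfolding mat_continuous_on_def
proof (intro ballI allI impI)
  fix s e :: real assume s: "s \<in> S" and e: "e > 0"
  have c: "0 \<le> c" by (rule l1_norm_le_nonneg[OF op_norm_leD[OF T]])
  then have "e / (c + 1) > 0" using e by simp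
  then obtain d where d: "d > 0" "\<forall>s'\<in>S. \<bar>s' - s\<bar> < d \<longrightarrow> mat_close (F s') (F s) (e / (c + 1))"
    using F(1)[unfolded mat_continuous_on_def, rule_format, OF s] by blast
  have "mat_close (mat_mult (F s') T) (mat_mult (F s) T) e" if s': "s' \<in> S" "\<bar>s' - s\<bar> < d" for s'
    unfolding mat_close_iff_op_norm_le mat_mult_eq_mat_vec
  proof (rule op_norm_leI, rule l1_norm_le_mono)
    fix y
    show "l1_norm_le (\<lambda>x. mat_vec (F s') (\<lambda>z. T z y) x - mat_vec (F s) (\<lambda>z. T z y) x) (e / (c + 1) * c)"
      using d(2) s' by (intro mat_close_mat_vec[OF _ F(2) F(2) op_norm_leD[OF T]]) (auto simp: s)
    show "e / (c + 1) * c \<le> e" using c e by (simp add: field_simps)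
  qed
  then show "\<exists>d>0. \<forall>s'\<in>S. \<bar>s' - s\<bar> < d \<longrightarrow> mat_close (mat_mult (F s') T) (mat_mult (F s) T) e"
    using d(1) by blast
qed

lemma homotopic_mat_path:
  assumes \<tau>: "0 < \<tau>" and G: "\<And>t. t \<in> {0..\<tau>} \<Longrightarrow> lis_mat (G t)" "mat_continuous_on {0..\<tau>} G"
  shows "homotopic_mat (G 0) (G \<tau>)" and "homotopic_mat (G \<tau>) (G 0)"
proof -
  have reparam: "homotopic_mat (G (\<phi> 0)) (G (\<phi> 1))"
    if "continuous_on {0..1} \<phi>" "\<phi> ` {0..1} \<subseteq> {0..\<tau>}" for \<phi> :: "real \<Rightarrow> real"
    unfolding homotopic_mat_def
    using mat_continuous_on_compose[OF G(2) that] G(1) that(2) by (intro exI[of _ "\<lambda>s. G (\<phi> s)"]) auto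
  have "continuous_on {0..1} (\<lambda>s::real. s * \<tau>)" "continuous_on {0..1} (\<lambda>s::real. (1 - s) * \<tau>)"
    by (intro continuous_intros)+
  moreover have "(\<lambda>s. s * \<tau>) ` {0..1} \<subseteq> {0..\<tau>}" "(\<lambda>s. (1 - s) * \<tau>) ` {0..1} \<subseteq> {0..\<tau>}"
    using \<tau> by (auto intro: mult_left_le_one_le)
  ultimately show "homotopic_mat (G 0) (G \<tau>)" and "homotopic_mat (G \<tau>) (G 0)"
    using reparam[of "\<lambda>s. s * \<tau>"] reparam[of "\<lambda>s. (1 - s) * \<tau>"] by simp_all
qed

lemma homotopic_mat_mult_texp:
  fixes T0 :: "('d::finite) smat"
  assumes T0: "lis_mat T0" and R: "local_rate_family 1 R" and P: "texp_solution 1 R P"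
  shows "homotopic_mat T0 (mat_mult (P 1) T0)"
proof -
  obtain C l K where "master_equation_solution 1 C l K R P"
    using master_equation_solutionI[OF _ R P] by auto
  then interpret master_equation_solution 1 C l K R P .
  have "homotopic_mat (mat_mult (P 0) T0) (mat_mult (P 1) T0)"
  proof (rule homotopic_mat_path(1)[where G="\<lambda>s. mat_mult (P s) T0"])
    show "lis_mat (mat_mult (P t) T0)" if "t \<in> {0..1}" for t
      by (rule lis_mat_mat_mult[OF lis_mat_P[OF that] T0])
    show "mat_continuous_on {0..1} (\<lambda>s. mat_mult (P s) T0)"
      using T0 by (intro mat_continuous_on_mult_right[OF P_continuous op_norm_le_P stochastic_op_norm_le])
        (simp_all add: lis_mat_def)
  qed simp
  then show ?thesis by (simp add: P_0 mat_mult_id_left)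
qed

lemma homotopic_texp_id:
  fixes P :: "real \<Rightarrow> ('d::finite) smat"
  assumes \<tau>: "0 < \<tau>" and R: "local_rate_family \<tau> R" and P: "texp_solution \<tau> R P"
  shows "homotopic_mat (P \<tau>) id_mat"
proof -
  obtain C l K where "master_equation_solution \<tau> C l K R P"
    using master_equation_solutionI[OF _ R P] \<tau> by auto
  then interpret master_equation_solution \<tau> C l K R P .
  show ?thesis using homotopic_mat_path(2)[OF \<tau> lis_mat_P P_continuous] by (simp add: P_0)
qed

theorem mainTheorem1:
  fixes T0 T1 T :: "('d::finite) smat"
  shows "(lis_mat T0 \<and> lis_mat T1 \<and> \<not> homotopic_mat T0 T1 \<longrightarrow>
           \<not> (\<exists>R P. local_rate_family 1 R \<and> piecewise_continuous_mat 1 R \<and>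
                   texp_solution 1 R P \<and> T1 = mat_mult (P 1) T0))
       \<and> (lis_mat T \<and> \<not> homotopic_mat T id_mat \<longrightarrow>
           (\<forall>\<tau>>0. \<not> (\<exists>R P. local_rate_family \<tau> R \<and> piecewise_continuous_mat \<tau> R \<and>
                   texp_solution \<tau> R P \<and> T = P \<tau>)))"
proof (intro conjI impI allI notI)
  assume "lis_mat T0 \<and> lis_mat T1 \<and> \<not> homotopic_mat T0 T1"
    and "\<exists>R P. local_rate_family 1 R \<and> piecewise_continuous_mat 1 R \<and>
      texp_solution 1 R P \<and> T1 = mat_mult (P 1) T0"
  then show False using homotopic_mat_mult_texp by blast
next
  fix \<tau> :: real
  assume "lis_mat T \<and> \<not> homotopic_mat T id_mat" and "\<tau> > 0"
    and "\<exists>R P. local_rate_family \<tau> R \<and> piecewise_continuous_mat \<tau> R \<and> texp_solution \<tau> R P \<and> T = P \<tau>"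
  then show False using homotopic_texp_id by blast
qed

end
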